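(* Let $a,b\geq0$ and $n$ be integers with $b+1\leq n$. The coefficient of the Schur function $s_{(a+1,1^b)}$ in the Schur expansion of the plethysm $s_{(1^n)}[1+h_1+h_2+\cdots]$ equals the number of pairs $(\lambda,\mu)$ with $\lambda=(\lambda_1\geq\cdots\geq\lambda_b\geq0)$, $\mu=(\mu_1>\cdots>\mu_{n-b}\geq0)$, $\sum_i\lambda_i+\sum_i\mu_i=a+1$, and $\mu_1>\lambda_1$ (the last condition vacuous when $b=0$).
   Context: $s_\nu$ denotes the Schur function and $h_i$ the complete homogeneous symmetric function of degree $i$. The plethysm $s_{(1^n)}[1+h_1+h_2+\cdots]$ is obtained by substituting the monomials occurring in $1+h_1+h_2+\cdots$ (with multiplicity) for the variables $x_1,x_2,\dotsc$ of $s_{(1^n)}=e_n(x_1,x_2,\dotsc)$. *)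

theory Defs
  imports Main
begin

text \<open>Symmetric functions in the countably many variables x_0, x_1, ... are represented
by their coefficient functions on exponent vectors (functions nat => nat of finite support).\<close>

definition fin_supp :: "(nat \<Rightarrow> nat) \<Rightarrow> bool" where
  "fin_supp \<alpha> \<longleftrightarrow> finite {i. \<alpha> i \<noteq> 0}"

definition deg :: "(nat \<Rightarrow> nat) \<Rightarrow> nat" where
  "deg \<gamma> = (\<Sum>i\<in>{i. \<gamma> i \<noteq> 0}. \<gamma> i)"

definition is_partition :: "nat list \<Rightarrow> bool" where
  "is_partition lam \<longleftrightarrow> sorted_wrt (\<ge>) lam \<and> (\<forall>x\<in>set lam. 0 < x)"

definition cells :: "nat list \<Rightarrow> (nat \<times> nat) set" where
  "cells lam = {(i, j). i < length lam \<and> j < lam ! i}"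

definition ssyt :: "nat list \<Rightarrow> (nat \<Rightarrow> nat) \<Rightarrow> (nat \<times> nat \<Rightarrow> nat) set" where
  "ssyt lam \<gamma> = {T. (\<forall>x. x \<notin> cells lam \<longrightarrow> T x = 0)
      \<and> (\<forall>i j. (i, j) \<in> cells lam \<longrightarrow> (i, Suc j) \<in> cells lam \<longrightarrow> T (i, j) \<le> T (i, Suc j))
      \<and> (\<forall>i j. (i, j) \<in> cells lam \<longrightarrow> (Suc i, j) \<in> cells lam \<longrightarrow> T (i, j) < T (Suc i, j))
      \<and> (\<forall>k. card {x \<in> cells lam. T x = k} = \<gamma> k)}"

text \<open>Kostka number = coefficient of x^gamma in the Schur function s_lambda.\<close>
definition kostka :: "nat list \<Rightarrow> (nat \<Rightarrow> nat) \<Rightarrow> nat" where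
  "kostka lam \<gamma> = card (ssyt lam \<gamma>)"

text \<open>c is a Schur expansion of f: f = sum over partitions lambda of c lambda * s_lambda.\<close>
definition schur_expansion :: "((nat \<Rightarrow> nat) \<Rightarrow> int) \<Rightarrow> (nat list \<Rightarrow> int) \<Rightarrow> bool" where
  "schur_expansion f c \<longleftrightarrow> (\<forall>\<gamma>. fin_supp \<gamma> \<longrightarrow>
      f \<gamma> = (\<Sum>lam\<in>{lam. is_partition lam \<and> sum_list lam = deg \<gamma>}. c lam * int (kostka lam \<gamma>)))"

definition schur_coeff :: "((nat \<Rightarrow> nat) \<Rightarrow> int) \<Rightarrow> nat list \<Rightarrow> int" where
  "schur_coeff f \<nu> = (THE x. \<exists>c. schur_expansion f c \<and> c \<nu> = x)"

text \<open>The plethysm e_n[1 + h_1 + h_2 + ...]: e_n evaluated at the family of all monomials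
  (each monomial, including 1, exactly once).\<close>
definition pleth_en :: "nat \<Rightarrow> (nat \<Rightarrow> nat) \<Rightarrow> int" where
  "pleth_en n \<gamma> = int (card {S. finite S \<and> card S = n \<and> (\<forall>\<alpha>\<in>S. fin_supp \<alpha>)
                                 \<and> (\<lambda>i. \<Sum>\<alpha>\<in>S. \<alpha> i) = \<gamma>})"

definition hook_pairs :: "nat \<Rightarrow> nat \<Rightarrow> nat \<Rightarrow> (nat list \<times> nat list) set" where
  "hook_pairs a b n = {(lam, mu). length lam = b \<and> sorted_wrt (\<ge>) lam
      \<and> length mu = n - b \<and> sorted_wrt (>) mu
      \<and> sum_list lam + sum_list mu = a + 1
      \<and> (b = 0 \<or> hd lam < hd mu)}"

end

theory Submission
  imports Defs "HOL-Library.Multiset" "HOL-Combinatorics.Transposition"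
begin

text \<open>
Let c be any Schur expansion of f = e_n[1 + h_1 + h_2 + ...]; one exists because f is symmetric
and the Kostka matrix is unitriangular for the dominance order. Apply to both sides the functional
F \<mapsto> [x_0^A] e_B^\<perp> F, which on coefficients unfolds through e_B = \<Sum>_r (-1)^(r-1) h_r e_(B-r).
On s_\<lambda> it gives [x_0^A] s_(\<lambda>/1^B), which is 1 for the two hooks (A, 1^B) and (A + 1, 1^(B-1))
and 0 otherwise. On f it counts pairs of an (n - B)-set and a B-multiset of monomials with product
x_0^A, that is, pairs (\<lambda>, \<mu>) of a weak and a strict partition with B and n - B parts (zeros
allowed) and total size A. Both evaluations are sign-reversing involution arguments. So
c(A, 1^B) + c(A + 1, 1^(B-1)) is this number of pairs, and splitting the pairs according to whether
\<mu>_1 > \<lambda>_1 solves the recursion in B.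
\<close>

section \<open>Horizontal strips and Kostka numbers\<close>

text \<open>Partitions and exponent vectors are lists; \<open>entry\<close> reads them with zero padding.\<close>

definition entry :: "nat list \<Rightarrow> nat \<Rightarrow> nat" where
  "entry xs i = (if i < length xs then xs ! i else 0)"

lemma entry_snoc: "entry (xs @ [r]) i = (if i = length xs then r else entry xs i)"
  by (auto simp: entry_def nth_append)

lemma entry_le_sum_list: "entry xs i \<le> sum_list xs"
  by (auto simp: entry_def elem_le_sum_list)

lemma entry_eqI: "length xs = length ys \<Longrightarrow> (\<And>i. entry xs i = entry ys i) \<Longrightarrow> xs = ys"
  by (metis entry_def nth_equalityI)

lemma sum_list_eq_sum_entry: "sum_list xs = (\<Sum>i<length xs. entry xs i)"
  by (simp add: sum_list_sum_nth atLeast0LessThan entry_def)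

lemma sum_entry_eq_sum_list:
  assumes "\<forall>i\<ge>k. entry xs i = 0"
  shows "(\<Sum>i<k. entry xs i) = sum_list xs"
proof -
  have "(\<Sum>i<k. entry xs i) = (\<Sum>i<max k (length xs). entry xs i)"
    by (rule sum.mono_neutral_left) (use assms in auto)
  also have "\<dots> = (\<Sum>i<length xs. entry xs i)"
    by (rule sum.mono_neutral_right) (auto simp: entry_def)
  finally show ?thesis by (simp add: sum_list_eq_sum_entry)
qed

lemma sum_entry_ge_length: "length xs \<le> k \<Longrightarrow> (\<Sum>i<k. entry xs i) = sum_list xs"
  by (rule sum_entry_eq_sum_list) (auto simp: entry_def)

lemma entry_sorted_Suc: "sorted_wrt (\<ge>) xs \<Longrightarrow> entry xs (Suc i) \<le> entry xs i"
  by (auto simp: entry_def sorted_wrt_iff_nth_less)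

lemma sorted_if_entry_Suc_le:
  assumes "\<And>i. entry xs (Suc i) \<le> entry xs i"
  shows "sorted_wrt (\<ge>) xs"
proof -
  have mono: "entry xs j \<le> entry xs i" if "i \<le> j" for i j
    using that
  proof (induction j)
    case (Suc j)
    then show ?case using assms[of j] by (cases "i = Suc j") auto
  qed simp
  show ?thesis unfolding sorted_wrt_iff_nth_less
  proof (intro allI impI)
    fix i j assume "i < j" "j < length xs"
    then show "xs ! j \<le> xs ! i" using mono[of i j] by (simp add: entry_def)
  qed
qed

lemma sum_list_le_if_entry_le:
  "length xs = length ys \<Longrightarrow> (\<And>i. entry xs i \<le> entry ys i) \<Longrightarrow> sum_list xs \<le> sum_list ys"
  by (simp add: sum_list_eq_sum_entry sum_mono)

lemma eq_if_entry_le_sum_list_eq: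
  assumes l: "length xs = length ys" and le: "\<And>i. entry xs i \<le> entry ys i"
    and s: "sum_list xs = sum_list ys"
  shows "xs = ys"
proof (rule entry_eqI[OF l])
  fix i
  show "entry xs i = entry ys i"
  proof (rule ccontr)
    assume "entry xs i \<noteq> entry ys i"
    then have lt: "entry xs i < entry ys i" using le[of i] by simp
    then have "i < length ys" by (simp add: entry_def split: if_splits)
    then have "(\<Sum>k<length ys. entry xs k) < (\<Sum>k<length ys. entry ys k)"
      using le lt by (intro sum_strict_mono_ex1) auto
    then show False using s l by (simp add: sum_list_eq_sum_entry)
  qed
qed

lemma mem_cells: "(i, j) \<in> cells lam \<longleftrightarrow> j < entry lam i"
  by (auto simp: cells_def entry_def)

lemma finite_cells: "finite (cells lam)"
proof -
  have "cells lam \<subseteq> {..<length lam} \<times> {..<sum_list lam}"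
    by (auto simp: cells_def elem_le_sum_list less_le_trans)
  then show ?thesis by (rule finite_subset) auto
qed

lemma card_cells: "card (cells lam) = sum_list lam"
proof -
  have "cells lam = Sigma {..<length lam} (\<lambda>i. {..<lam ! i})"
    by (auto simp: cells_def)
  then show ?thesis
    by (simp add: card_SigmaI sum_list_sum_nth atLeast0LessThan)
qed

lemma card_cells_Diff:
  "cells mu \<subseteq> cells lam \<Longrightarrow> card (cells lam - cells mu) = sum_list lam - sum_list mu"
  by (simp add: card_Diff_subset finite_cells card_cells)

lemma card_row_cells: "card {j. (i, j) \<in> cells lam} = entry lam i"
  by (simp add: mem_cells flip: lessThan_def)

lemma cells_inject:
  assumes "length mu = length lam" and "cells mu = cells lam"
  shows "mu = lam"
  using assms(1)
proof (rule entry_eqI)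
  fix i
  show "entry mu i = entry lam i"
    using card_row_cells[of i mu] card_row_cells[of i lam] assms(2) by simp
qed

lemma downward_closed_eq_lessThan:
  fixes S :: "nat set"
  assumes "finite S" and "\<And>j j'. j \<in> S \<Longrightarrow> j' \<le> j \<Longrightarrow> j' \<in> S"
  shows "S = {..<card S}"
proof (cases "S = {}")
  case False
  then have "S = {..Max S}"
    using assms by (auto intro: Max_in)
  then show ?thesis by (metis card_atMost lessThan_Suc_atMost)
qed simp

definition horiz_strip :: "nat list \<Rightarrow> nat list \<Rightarrow> bool" where
  "horiz_strip mu lam \<longleftrightarrow> length mu = length lam \<and>
     (\<forall>i<length lam. entry mu i \<le> entry lam i \<and> entry lam (Suc i) \<le> entry mu i)"

definition horiz_strips :: "nat list \<Rightarrow> nat \<Rightarrow> nat list set" where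
  "horiz_strips lam r = {mu. horiz_strip mu lam \<and> sum_list lam = sum_list mu + r}"

definition bounded_lists :: "nat list \<Rightarrow> nat list set" where
  "bounded_lists lam = {mu. set mu \<subseteq> {0..sum_list lam} \<and> length mu = length lam}"

lemma finite_bounded_lists: "finite (bounded_lists lam)"
  unfolding bounded_lists_def
  using finite_lists_length_eq[of "{0..sum_list lam}" "length lam"] by simp

lemma bounded_listsI:
  assumes "length mu = length lam" and "\<And>i. entry mu i \<le> entry lam i"
  shows "mu \<in> bounded_lists lam"
proof -
  have "x \<le> sum_list lam" if "x \<in> set mu" for x
  proof -
    obtain i where "i < length mu" "x = entry mu i"
      using \<open>x \<in> set mu\<close> by (auto simp: in_set_conv_nth entry_def)
    then show ?thesis using assms(2)[of i] entry_le_sum_list[of lam i] by simp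
  qed
  then show ?thesis using assms(1) by (auto simp: bounded_lists_def)
qed

lemma horiz_strip_le: "horiz_strip mu lam \<Longrightarrow> entry mu i \<le> entry lam i"
  by (cases "i < length lam") (auto simp: horiz_strip_def entry_def)

lemma horiz_strip_Suc_le: "horiz_strip mu lam \<Longrightarrow> entry lam (Suc i) \<le> entry mu i"
  by (cases "i < length lam") (auto simp: horiz_strip_def entry_def)

lemma horiz_strip_bounded: "horiz_strip mu lam \<Longrightarrow> mu \<in> bounded_lists lam"
  by (rule bounded_listsI) (auto simp: horiz_strip_def horiz_strip_le)

lemma finite_horiz_strips: "finite (horiz_strips lam r)"
  by (rule finite_subset[OF _ finite_bounded_lists[of lam]])
    (auto simp: horiz_strips_def horiz_strip_bounded)

lemma horiz_strip_sorted: "horiz_strip mu lam \<Longrightarrow> sorted_wrt (\<ge>) mu"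
  by (rule sorted_if_entry_Suc_le) (meson horiz_strip_Suc_le horiz_strip_le le_trans)

lemma horiz_strip_self: "sorted_wrt (\<ge>) mu \<Longrightarrow> horiz_strip mu mu"
  by (simp add: horiz_strip_def entry_sorted_Suc)

lemma horiz_strip_cells: "horiz_strip mu lam \<Longrightarrow> cells mu \<subseteq> cells lam"
  by (auto simp: mem_cells) (meson horiz_strip_le less_le_trans)

lemma horiz_strip_sum_list_le: "horiz_strip mu lam \<Longrightarrow> sum_list mu \<le> sum_list lam"
  by (simp add: horiz_strip_def horiz_strip_le sum_list_le_if_entry_le)

text \<open>Kostka numbers through the branching rule: the cells holding the largest letter of a
  semistandard tableau form a horizontal strip. The weight list is consumed from its last letter.\<close>

fun kostka_strips :: "nat list \<Rightarrow> nat list \<Rightarrow> nat" where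
  "kostka_strips lam [] = (if sum_list lam = 0 then 1 else 0)"
| "kostka_strips lam (r # rs) = (\<Sum>mu\<in>horiz_strips lam r. kostka_strips mu rs)"

lemma ssyt_zero: "T \<in> ssyt lam g \<Longrightarrow> x \<notin> cells lam \<Longrightarrow> T x = 0"
  unfolding ssyt_def by blast

lemma ssyt_row:
  "T \<in> ssyt lam g \<Longrightarrow> (i, j) \<in> cells lam \<Longrightarrow> (i, Suc j) \<in> cells lam \<Longrightarrow> T (i, j) \<le> T (i, Suc j)"
  by (simp add: ssyt_def)

lemma ssyt_col:
  "T \<in> ssyt lam g \<Longrightarrow> (i, j) \<in> cells lam \<Longrightarrow> (Suc i, j) \<in> cells lam \<Longrightarrow> T (i, j) < T (Suc i, j)"
  by (simp add: ssyt_def)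

lemma ssyt_content: "T \<in> ssyt lam g \<Longrightarrow> card {x \<in> cells lam. T x = k} = g k"
  by (simp add: ssyt_def)

lemma ssyt_content_nonzero:
  assumes "T \<in> ssyt lam g" and "x \<in> cells lam"
  shows "g (T x) \<noteq> 0"
proof -
  have "{y \<in> cells lam. T y = T x} \<noteq> {}" using assms(2) by blast
  moreover have "finite {y \<in> cells lam. T y = T x}" using finite_cells by simp
  ultimately have "0 < card {y \<in> cells lam. T y = T x}" by (simp add: card_gt_0_iff)
  then show ?thesis using ssyt_content[OF assms(1), of "T x"] by simp
qed

lemma ssyt_less_length: "T \<in> ssyt mu (entry gam) \<Longrightarrow> x \<in> cells mu \<Longrightarrow> T x < length gam"
  using ssyt_content_nonzero[of T mu "entry gam" x] by (auto simp: entry_def split: if_splits)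

lemma ssyt_row_mono:
  "T \<in> ssyt lam g \<Longrightarrow> (i, j') \<in> cells lam \<Longrightarrow> j \<le> j' \<Longrightarrow> T (i, j) \<le> T (i, j')"
proof (induction j')
  case (Suc k)
  then show ?case
    using ssyt_row[of T lam g i k] by (cases "j = Suc k") (auto simp: mem_cells)
qed simp

lemma finite_ssyt: "finite (ssyt lam (entry gam))"
proof (rule finite_subset)
  show "ssyt lam (entry gam) \<subseteq>
      {T. \<forall>x. (x \<in> cells lam \<longrightarrow> T x \<in> {..<length gam}) \<and> (x \<notin> cells lam \<longrightarrow> T x = 0)}"
    using ssyt_less_length ssyt_zero by blast
  show "finite {T. \<forall>x. (x \<in> cells lam \<longrightarrow> T x \<in> {..<length gam}) \<and> (x \<notin> cells lam \<longrightarrow> T x = 0)}"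
    by (rule finite_set_of_finite_funs) (auto simp: finite_cells)
qed

definition extend_tableau ::
    "nat list \<Rightarrow> nat list \<Rightarrow> nat \<Rightarrow> (nat \<times> nat \<Rightarrow> nat) \<Rightarrow> nat \<times> nat \<Rightarrow> nat" where
  "extend_tableau lam mu l T = (\<lambda>x. if x \<in> cells lam \<and> x \<notin> cells mu then l else T x)"

lemma extend_tableau_ssyt:
  assumes mu: "mu \<in> horiz_strips lam r" and T: "T \<in> ssyt mu (entry gam)"
  shows "extend_tableau lam mu (length gam) T \<in> ssyt lam (entry (gam @ [r]))"
proof -
  let ?l = "length gam" and ?E = "extend_tableau lam mu (length gam) T"
  have h: "horiz_strip mu lam" and s: "sum_list lam = sum_list mu + r"
    using mu by (auto simp: horiz_strips_def)
  have sub: "cells mu \<subseteq> cells lam" by (rule horiz_strip_cells[OF h])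
  have lt: "x \<in> cells mu \<Longrightarrow> T x < ?l" for x by (rule ssyt_less_length[OF T])
  have E: "?E x = (if x \<in> cells mu then T x else if x \<in> cells lam then ?l else 0)" for x
    using sub ssyt_zero[OF T, of x] by (auto simp: extend_tableau_def)
  have zero: "?E x = 0" if "x \<notin> cells lam" for x
    using that sub by (auto simp: E)
  have row: "?E (i, j) \<le> ?E (i, Suc j)" if "(i, Suc j) \<in> cells lam" for i j
    using ssyt_row[OF T, of i j] lt[of "(i, j)"] that by (auto simp: E mem_cells)
  have col: "?E (i, j) < ?E (Suc i, j)" if "(Suc i, j) \<in> cells lam" for i j
  proof -
    have "Suc i < length lam" using that by (auto simp: mem_cells entry_def split: if_splits)
    then have "(i, j) \<in> cells mu"
      using that horiz_strip_Suc_le[OF h, of i] by (simp add: mem_cells)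
    then show ?thesis using ssyt_col[OF T, of i j] lt that by (auto simp: E)
  qed
  have content: "card {x \<in> cells lam. ?E x = k} = entry (gam @ [r]) k" for k
  proof (cases "k = ?l")
    case True
    then have "{x \<in> cells lam. ?E x = k} = cells lam - cells mu"
      using sub by (auto simp: E dest: lt)
    then show ?thesis using True s card_cells_Diff[OF sub] by (simp add: entry_snoc)
  next
    case False
    then have "{x \<in> cells lam. ?E x = k} = {x \<in> cells mu. T x = k}"
      using sub by (auto simp: E)
    then show ?thesis using False ssyt_content[OF T, of k] by (simp add: entry_snoc)
  qed
  show ?thesis unfolding ssyt_def
    using zero row col content by blast
qed

lemma extend_tableau_inj: "inj_on (extend_tableau lam mu l) (ssyt mu g)"
proof (rule inj_onI)
  fix T1 T2 assume T: "T1 \<in> ssyt mu g" "T2 \<in> ssyt mu g"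
    and e: "extend_tableau lam mu l T1 = extend_tableau lam mu l T2"
  show "T1 = T2"
  proof
    fix x show "T1 x = T2 x"
      using fun_cong[OF e, of x] ssyt_zero[OF T(1), of x] ssyt_zero[OF T(2), of x]
      by (cases "x \<in> cells mu") (auto simp: extend_tableau_def)
  qed
qed

lemma extend_tableau_shape_eq:
  assumes mu1: "mu1 \<in> horiz_strips lam r" and mu2: "mu2 \<in> horiz_strips lam r"
    and T1: "T1 \<in> ssyt mu1 (entry gam)" and T2: "T2 \<in> ssyt mu2 (entry gam)"
    and e: "extend_tableau lam mu1 (length gam) T1 = extend_tableau lam mu2 (length gam) T2"
  shows "mu1 = mu2"
proof -
  have c: "cells mu = {x \<in> cells lam. extend_tableau lam mu (length gam) T x < length gam}"
    if "mu \<in> horiz_strips lam r" "T \<in> ssyt mu (entry gam)" for mu T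
    using horiz_strip_cells[of mu lam] that ssyt_less_length[OF that(2)]
    by (auto simp: horiz_strips_def extend_tableau_def)
  show ?thesis
    using c[OF mu1 T1] c[OF mu2 T2] e mu1 mu2
    by (intro cells_inject) (auto simp: horiz_strips_def horiz_strip_def)
qed

definition shape_below :: "(nat \<times> nat \<Rightarrow> nat) \<Rightarrow> nat list \<Rightarrow> nat \<Rightarrow> nat list" where
  "shape_below T lam l = map (\<lambda>i. card {j. j < lam ! i \<and> T (i, j) < l}) [0..<length lam]"

lemma mem_cells_shape_below:
  assumes T: "T \<in> ssyt lam g"
  shows "x \<in> cells (shape_below T lam l) \<longleftrightarrow> x \<in> cells lam \<and> T x < l"
proof -
  obtain i j where x: "x = (i, j)" by (cases x)
  show ?thesis
  proof (cases "i < length lam")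
    case True
    define S where "S = {j. j < lam ! i \<and> T (i, j) < l}"
    have S: "S = {..<card S}"
    proof (rule downward_closed_eq_lessThan)
      fix j j' assume "j \<in> S" and "j' \<le> j"
      then show "j' \<in> S"
        using ssyt_row_mono[OF T, of i j j'] True by (auto simp: S_def cells_def)
    qed (simp add: S_def)
    have "x \<in> cells (shape_below T lam l) \<longleftrightarrow> j \<in> {..<card S}"
      using True by (simp add: x mem_cells entry_def shape_below_def S_def)
    also have "\<dots> \<longleftrightarrow> j \<in> S" by (metis S)
    also have "\<dots> \<longleftrightarrow> x \<in> cells lam \<and> T x < l"
      using True by (simp add: S_def x cells_def)
    finally show ?thesis .
  next
    case False
    then show ?thesis by (simp add: x mem_cells entry_def shape_below_def)
  qed
qed

lemma shape_below_horiz_strips: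
  assumes lam: "sorted_wrt (\<ge>) lam" and T: "T \<in> ssyt lam (entry (gam @ [r]))"
  shows "shape_below T lam (length gam) \<in> horiz_strips lam r"
proof -
  let ?l = "length gam" and ?mu = "shape_below T lam (length gam)"
  note key = mem_cells_shape_below[OF T]
  have le: "x \<in> cells lam \<Longrightarrow> T x \<le> ?l" for x
    using ssyt_content_nonzero[OF T, of x] by (auto simp: entry_def nth_append split: if_splits)
  have sub: "cells ?mu \<subseteq> cells lam" using key by auto
  have len: "length ?mu = length lam" by (simp add: shape_below_def)
  have "entry ?mu i \<le> entry lam i" for i
  proof (rule ccontr)
    assume "\<not> ?thesis"
    then have "(i, entry lam i) \<in> cells ?mu" by (simp add: mem_cells)
    then show False using sub mem_cells[of i "entry lam i" lam] by blast
  qed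
  moreover have "entry lam (Suc i) \<le> entry ?mu i" for i
  proof (rule ccontr)
    assume n: "\<not> ?thesis"
    let ?j = "entry ?mu i"
    have c2: "(Suc i, ?j) \<in> cells lam" and c1: "(i, ?j) \<in> cells lam"
      using n entry_sorted_Suc[OF lam, of i] by (auto simp: mem_cells)
    then have "T (i, ?j) < ?l" using ssyt_col[OF T c1 c2] le[OF c2] by simp
    then have "(i, ?j) \<in> cells ?mu" using key c1 by blast
    then show False by (simp add: mem_cells)
  qed
  moreover have "cells lam - cells ?mu = {x \<in> cells lam. T x = ?l}"
    using key le by force
  then have "sum_list lam - sum_list ?mu = r"
    using card_cells_Diff[OF sub] ssyt_content[OF T, of ?l] by (simp add: entry_snoc)
  moreover have "sum_list ?mu \<le> sum_list lam"
    using sub finite_cells card_mono card_cells by metis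
  ultimately show ?thesis
    unfolding horiz_strips_def horiz_strip_def using len by auto
qed

lemma ssyt_restrict_below:
  assumes T: "T \<in> ssyt lam (entry (gam @ [r]))"
  shows "(\<lambda>x. if x \<in> cells (shape_below T lam (length gam)) then T x else 0)
           \<in> ssyt (shape_below T lam (length gam)) (entry gam)"
    (is "?T0 \<in> ssyt ?mu _")
proof -
  note key = mem_cells_shape_below[OF T]
  have "card {x \<in> cells ?mu. ?T0 x = k} = entry gam k" for k
  proof (cases "k < length gam")
    case True
    then have "{x \<in> cells ?mu. ?T0 x = k} = {x \<in> cells lam. T x = k}" using key by auto
    then show ?thesis using ssyt_content[OF T, of k] True by (simp add: entry_snoc)
  next
    case False
    then have e: "{x \<in> cells ?mu. ?T0 x = k} = {}" using key by auto
    show ?thesis unfolding e using False by (simp add: entry_def)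
  qed
  then show ?thesis
    using key ssyt_row[OF T] ssyt_col[OF T] by (auto simp: ssyt_def)
qed

lemma ssyt_snoc_cover:
  assumes lam: "sorted_wrt (\<ge>) lam" and T: "T \<in> ssyt lam (entry (gam @ [r]))"
  shows "\<exists>mu\<in>horiz_strips lam r. T \<in> extend_tableau lam mu (length gam) ` ssyt mu (entry gam)"
proof -
  let ?mu = "shape_below T lam (length gam)"
  let ?T0 = "\<lambda>x. if x \<in> cells ?mu then T x else 0"
  have mu: "?mu \<in> horiz_strips lam r" by (rule shape_below_horiz_strips[OF lam T])
  have "x \<in> cells lam \<Longrightarrow> T x \<le> length gam" for x
    using ssyt_content_nonzero[OF T, of x] by (auto simp: entry_def nth_append split: if_splits)
  then have eq: "T = extend_tableau lam ?mu (length gam) ?T0"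
    using mem_cells_shape_below[OF T] ssyt_zero[OF T]
    by (auto simp: extend_tableau_def fun_eq_iff) (meson le_neq_implies_less)
  have "T \<in> extend_tableau lam ?mu (length gam) ` ssyt ?mu (entry gam)"
    using eq ssyt_restrict_below[OF T] by (rule image_eqI)
  then show ?thesis using mu by (rule bexI[where x = ?mu])
qed

lemma kostka_snoc:
  assumes lam: "sorted_wrt (\<ge>) lam"
  shows "kostka lam (entry (gam @ [r])) = (\<Sum>mu\<in>horiz_strips lam r. kostka mu (entry gam))"
proof -
  let ?X = "\<lambda>mu. extend_tableau lam mu (length gam) ` ssyt mu (entry gam)"
  have "ssyt lam (entry (gam @ [r])) = (\<Union>mu\<in>horiz_strips lam r. ?X mu)"
  proof (intro equalityI subsetI)
    fix T assume "T \<in> ssyt lam (entry (gam @ [r]))"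
    from ssyt_snoc_cover[OF lam this] obtain mu
      where "mu \<in> horiz_strips lam r" and "T \<in> ?X mu" by (rule bexE)
    then show "T \<in> (\<Union>mu\<in>horiz_strips lam r. ?X mu)" by (rule UN_I)
  next
    fix T assume "T \<in> (\<Union>mu\<in>horiz_strips lam r. ?X mu)"
    then obtain mu T0 where "mu \<in> horiz_strips lam r" "T0 \<in> ssyt mu (entry gam)"
      and "T = extend_tableau lam mu (length gam) T0" by blast
    then show "T \<in> ssyt lam (entry (gam @ [r]))" by (simp add: extend_tableau_ssyt)
  qed
  moreover have "card (\<Union>mu\<in>horiz_strips lam r. ?X mu) = (\<Sum>mu\<in>horiz_strips lam r. card (?X mu))"
  proof (rule card_UN_disjoint[OF finite_horiz_strips])
    show "\<forall>mu\<in>horiz_strips lam r. finite (?X mu)" using finite_ssyt by blast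
    show "\<forall>mu1\<in>horiz_strips lam r. \<forall>mu2\<in>horiz_strips lam r. mu1 \<noteq> mu2 \<longrightarrow> ?X mu1 \<inter> ?X mu2 = {}"
    proof (intro ballI impI equals0I)
      fix mu1 mu2 T assume "mu1 \<in> horiz_strips lam r" "mu2 \<in> horiz_strips lam r" "mu1 \<noteq> mu2"
        and "T \<in> ?X mu1 \<inter> ?X mu2"
      then show False using extend_tableau_shape_eq by blast
    qed
  qed
  ultimately show ?thesis
    unfolding kostka_def by (simp add: card_image extend_tableau_inj)
qed

lemma kostka_Nil: "kostka lam (entry []) = kostka_strips lam []"
proof (cases "sum_list lam = 0")
  case True
  then have "card (cells lam) = 0" by (simp only: card_cells)
  then have "cells lam = {}" using finite_cells by simp
  then have "ssyt lam (entry []) = {\<lambda>_. 0}" by (auto simp: ssyt_def entry_def)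
  then show ?thesis using True by (simp add: kostka_def)
next
  case False
  then have "cells lam \<noteq> {}" using card_cells[of lam] by auto
  then obtain x where "x \<in> cells lam" by blast
  then have "ssyt lam (entry []) = {}"
    using ssyt_content_nonzero[of _ lam "entry []" x] by (auto simp: entry_def)
  then show ?thesis using False by (simp add: kostka_def)
qed

lemma kostka_eq_kostka_strips:
  "sorted_wrt (\<ge>) lam \<Longrightarrow> kostka lam (entry gam) = kostka_strips lam (rev gam)"
proof (induction gam arbitrary: lam rule: rev_induct)
  case Nil
  then show ?case by (simp add: kostka_Nil)
next
  case (snoc r gam)
  have "kostka lam (entry (gam @ [r])) = (\<Sum>mu\<in>horiz_strips lam r. kostka mu (entry gam))"
    by (rule kostka_snoc[OF snoc.prems])
  also have "\<dots> = (\<Sum>mu\<in>horiz_strips lam r. kostka_strips mu (rev gam))"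
    by (rule sum.cong) (auto simp: horiz_strips_def intro: snoc.IH horiz_strip_sorted)
  finally show ?case by simp
qed

section \<open>Invariance under permutations of the variables\<close>

lemma sum_sum_eq_sum_card_mult:
  fixes h :: "'b \<Rightarrow> 'c::comm_semiring_1"
  assumes "finite A" and "finite U" and "\<And>a. a \<in> A \<Longrightarrow> B a \<subseteq> U"
  shows "(\<Sum>a\<in>A. \<Sum>b\<in>B a. h b) = (\<Sum>b\<in>U. of_nat (card {a\<in>A. b \<in> B a}) * h b)"
proof -
  have "(\<Sum>a\<in>A. \<Sum>b\<in>B a. h b) = (\<Sum>a\<in>A. \<Sum>b\<in>U. if b \<in> B a then h b else 0)"
  proof (rule sum.cong[OF refl])
    fix a assume "a \<in> A"
    then show "(\<Sum>b\<in>B a. h b) = (\<Sum>b\<in>U. if b \<in> B a then h b else 0)"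
      using assms(2,3) by (simp add: sum.If_cases Int_absorb1)
  qed
  also have "\<dots> = (\<Sum>b\<in>U. \<Sum>a\<in>A. if b \<in> B a then h b else 0)"
    by (rule sum.swap)
  also have "\<dots> = (\<Sum>b\<in>U. of_nat (card {a\<in>A. b \<in> B a}) * h b)"
    using assms(1) by (simp flip: sum.inter_filter)
  finally show ?thesis .
qed

lemma mset_invariant_if_swap_invariant:
  assumes swap: "\<And>xs s t ys. F (xs @ s # t # ys) = F (xs @ t # s # ys)"
    and "mset xs = mset ys"
  shows "F xs = F ys"
  using assms
proof (induction xs arbitrary: ys F)
  case (Cons x xs)
  have move_front: "F (us @ x # vs) = F (x # us @ vs)" for us vs
  proof (induction us arbitrary: vs rule: rev_induct)
    case (snoc u us)
    have "F ((us @ [u]) @ x # vs) = F (us @ x # u # vs)" using Cons.prems(1) by simp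
    also have "\<dots> = F (x # (us @ [u]) @ vs)" using snoc.IH by simp
    finally show ?case .
  qed simp
  obtain us vs where ys: "ys = us @ x # vs"
    using Cons.prems(2) by (metis list.set_intros(1) set_mset_mset split_list)
  have "F (x # xs) = F (x # us @ vs)"
    using Cons.prems ys by (intro Cons.IH[where F = "\<lambda>l. F (x # l)"]) (auto simp flip: append_Cons)
  then show ?case using move_front ys by simp
qed simp

text \<open>The Bender--Knuth involution: for fixed \<open>nu\<close> and \<open>lam\<close>, the shapes \<open>mu\<close> with \<open>lam/mu\<close>
  and \<open>mu/nu\<close> horizontal strips form a box of row intervals
  \<open>bk_lower nu lam i \<le> entry mu i \<le> bk_upper nu lam i\<close>, and reflecting every row in its
  interval exchanges the sizes of the two strips.\<close>

definition bk_lower :: "nat list \<Rightarrow> nat list \<Rightarrow> nat \<Rightarrow> nat" where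
  "bk_lower nu lam i = max (entry nu i) (entry lam (Suc i))"

definition bk_upper :: "nat list \<Rightarrow> nat list \<Rightarrow> nat \<Rightarrow> nat" where
  "bk_upper nu lam i = (if i = 0 then entry lam 0 else min (entry lam i) (entry nu (i - 1)))"

lemma sum_bk_bounds:
  assumes "length nu = length lam"
  shows "(\<Sum>i<length lam. bk_lower nu lam i + bk_upper nu lam i) = sum_list nu + sum_list lam"
proof (cases "length lam")
  case (Suc n)
  let ?A = "entry nu" and ?L = "entry lam"
  have "?L (Suc n) = 0" using Suc by (simp add: entry_def)
  then have lower: "(\<Sum>i<Suc n. bk_lower nu lam i) = (\<Sum>i<n. max (?A i) (?L (Suc i))) + ?A n"
    by (simp add: bk_lower_def)
  have upper: "(\<Sum>i<Suc n. bk_upper nu lam i) = ?L 0 + (\<Sum>i<n. min (?A i) (?L (Suc i)))"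
    by (subst sum.lessThan_Suc_shift) (simp add: bk_upper_def min.commute)
  have "(\<Sum>i<n. max (?A i) (?L (Suc i))) + (\<Sum>i<n. min (?A i) (?L (Suc i)))
      = (\<Sum>i<n. max (?A i) (?L (Suc i)) + min (?A i) (?L (Suc i)))"
    by (simp add: sum.distrib)
  also have "\<dots> = (\<Sum>i<n. ?A i + ?L (Suc i))"
    by (intro sum.cong refl) (simp add: max_def min_def)
  also have "\<dots> = (\<Sum>i<n. ?A i) + (\<Sum>i<n. ?L (Suc i))"
    by (simp add: sum.distrib)
  finally have "(\<Sum>i<Suc n. bk_lower nu lam i + bk_upper nu lam i) = (\<Sum>i<Suc n. ?A i) + (\<Sum>i<Suc n. ?L i)"
    unfolding sum.distrib lower upper sum.lessThan_Suc_shift[of ?L] by simp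
  then show ?thesis using Suc assms by (simp add: sum_list_eq_sum_entry)
qed (use assms in simp)

lemma two_horiz_strips_iff:
  assumes "length nu = length lam" and "length mu = length lam"
  shows "horiz_strip nu mu \<and> horiz_strip mu lam \<longleftrightarrow>
    (\<forall>i<length lam. bk_lower nu lam i \<le> entry mu i \<and> entry mu i \<le> bk_upper nu lam i)"
proof
  assume h: "horiz_strip nu mu \<and> horiz_strip mu lam"
  have "entry mu i \<le> entry nu (i - 1)" if "i \<noteq> 0" for i
    using horiz_strip_Suc_le[of nu mu "i - 1"] h that by simp
  then show "\<forall>i<length lam. bk_lower nu lam i \<le> entry mu i \<and> entry mu i \<le> bk_upper nu lam i"
    using h by (auto simp: bk_lower_def bk_upper_def horiz_strip_le horiz_strip_Suc_le)
next
  assume b: "\<forall>i<length lam. bk_lower nu lam i \<le> entry mu i \<and> entry mu i \<le> bk_upper nu lam i"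
  have "entry mu (Suc i) \<le> entry nu i" if "i < length lam" for i
  proof (cases "Suc i < length lam")
    case True then show ?thesis using b by (fastforce simp: bk_upper_def)
  next
    case False then show ?thesis using assms by (simp add: entry_def)
  qed
  moreover have "entry mu i \<le> entry lam i" if "i < length lam" for i
    using b that by (cases i) (auto simp: bk_upper_def)
  ultimately show "horiz_strip nu mu \<and> horiz_strip mu lam"
    using b assms by (auto simp: horiz_strip_def bk_lower_def)
qed

definition middle_shapes :: "nat list \<Rightarrow> nat list \<Rightarrow> nat \<Rightarrow> nat \<Rightarrow> nat list set" where
  "middle_shapes nu lam s t = {mu. horiz_strip nu mu \<and> horiz_strip mu lam
     \<and> sum_list lam = sum_list mu + s \<and> sum_list mu = sum_list nu + t}"

definition bender_knuth :: "nat list \<Rightarrow> nat list \<Rightarrow> nat list \<Rightarrow> nat list" where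
  "bender_knuth nu lam mu =
     map (\<lambda>i. bk_lower nu lam i + bk_upper nu lam i - entry mu i) [0..<length lam]"

lemma entry_bender_knuth:
  "entry (bender_knuth nu lam mu) i =
     (if i < length lam then bk_lower nu lam i + bk_upper nu lam i - entry mu i else 0)"
  by (simp add: bender_knuth_def entry_def)

lemma bender_knuth_middle_shapes:
  assumes mu: "mu \<in> middle_shapes nu lam s t"
  shows "bender_knuth nu lam mu \<in> middle_shapes nu lam t s"
    and "bender_knuth nu lam (bender_knuth nu lam mu) = mu"
proof -
  have hs: "horiz_strip nu mu" "horiz_strip mu lam" and s1: "sum_list lam = sum_list mu + s"
    and s2: "sum_list mu = sum_list nu + t" using mu by (auto simp: middle_shapes_def)
  have lens: "length nu = length lam" "length mu = length lam" using hs by (auto simp: horiz_strip_def)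
  have range: "\<forall>i<length lam. bk_lower nu lam i \<le> entry mu i \<and> entry mu i \<le> bk_upper nu lam i"
    using two_horiz_strips_iff[OF lens] hs by simp
  let ?m = "bender_knuth nu lam mu"
  have len: "length ?m = length lam" by (simp add: bender_knuth_def)
  note entry_m = entry_bender_knuth[of nu lam mu]
  have "horiz_strip nu ?m \<and> horiz_strip ?m lam"
    using two_horiz_strips_iff[OF lens(1) len] range entry_m by auto
  moreover have "sum_list ?m = sum_list nu + sum_list lam - sum_list mu"
  proof -
    have "sum_list ?m = (\<Sum>i<length lam. bk_lower nu lam i + bk_upper nu lam i - entry mu i)"
      by (simp add: sum_list_eq_sum_entry len entry_m)
    also have "\<dots> = (\<Sum>i<length lam. bk_lower nu lam i + bk_upper nu lam i) - (\<Sum>i<length lam. entry mu i)"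
      by (rule sum_subtractf_nat) (use range in auto)
    finally show ?thesis using sum_bk_bounds[OF lens(1)] lens by (simp add: sum_list_eq_sum_entry)
  qed
  ultimately show "?m \<in> middle_shapes nu lam t s"
    using s1 s2 by (auto simp: middle_shapes_def)
  show "bender_knuth nu lam ?m = mu"
  proof (rule entry_eqI)
    show "length (bender_knuth nu lam ?m) = length mu" using lens by (simp add: bender_knuth_def)
    fix i
    show "entry (bender_knuth nu lam ?m) i = entry mu i"
    proof (cases "i < length lam")
      case True then show ?thesis using range[rule_format, OF True] by (simp add: entry_bender_knuth)
    next
      case False then show ?thesis using lens by (simp add: entry_bender_knuth, simp add: entry_def)
    qed
  qed
qed

lemma card_middle_shapes_commute: "card (middle_shapes nu lam s t) = card (middle_shapes nu lam t s)"
proof -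
  have "bij_betw (bender_knuth nu lam) (middle_shapes nu lam s t) (middle_shapes nu lam t s)"
    by (rule bij_betw_byWitness[where f' = "bender_knuth nu lam"])
      (use bender_knuth_middle_shapes in blast)+
  then show ?thesis by (rule bij_betw_same_card)
qed

lemma sum_horiz_strips_horiz_strips:
  fixes g :: "nat list \<Rightarrow> 'a::comm_semiring_1"
  shows "(\<Sum>mu\<in>horiz_strips lam s. \<Sum>nu\<in>horiz_strips mu t. g nu)
       = (\<Sum>nu\<in>bounded_lists lam. of_nat (card (middle_shapes nu lam s t)) * g nu)"
proof -
  have "nu \<in> bounded_lists lam" if "mu \<in> horiz_strips lam s" "nu \<in> horiz_strips mu t" for mu nu
  proof (rule bounded_listsI)
    from that have h: "horiz_strip mu lam" "horiz_strip nu mu" by (auto simp: horiz_strips_def)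
    then show "length nu = length lam" by (simp add: horiz_strip_def)
    show "entry nu i \<le> entry lam i" for i using h horiz_strip_le le_trans by blast
  qed
  then have "(\<Sum>mu\<in>horiz_strips lam s. \<Sum>nu\<in>horiz_strips mu t. g nu) =
      (\<Sum>nu\<in>bounded_lists lam. of_nat (card {mu \<in> horiz_strips lam s. nu \<in> horiz_strips mu t}) * g nu)"
    by (intro sum_sum_eq_sum_card_mult[OF finite_horiz_strips finite_bounded_lists]) blast
  moreover have "{mu \<in> horiz_strips lam s. nu \<in> horiz_strips mu t} = middle_shapes nu lam s t" for nu
    by (auto simp: horiz_strips_def middle_shapes_def)
  ultimately show ?thesis by simp
qed

lemma kostka_strips_swap:
  "kostka_strips lam (xs @ s # t # ys) = kostka_strips lam (xs @ t # s # ys)"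
proof (induction xs arbitrary: lam)
  case Nil
  show ?case
    using sum_horiz_strips_horiz_strips[where lam = lam and s = s and t = t and g = "\<lambda>nu. kostka_strips nu ys"]
      sum_horiz_strips_horiz_strips[where lam = lam and s = t and t = s and g = "\<lambda>nu. kostka_strips nu ys"]
    by (simp add: card_middle_shapes_commute)
qed simp

lemma kostka_mset_invariant:
  assumes "sorted_wrt (\<ge>) lam" and "mset xs = mset ys"
  shows "kostka lam (entry xs) = kostka lam (entry ys)"
proof -
  have "kostka_strips lam (rev xs) = kostka_strips lam (rev ys)"
    using kostka_strips_swap
    by (intro mset_invariant_if_swap_invariant[where F = "\<lambda>g. kostka_strips lam (rev g)", OF _ assms(2)])
      simp
  then show ?thesis using kostka_eq_kostka_strips[OF assms(1)] by simp
qed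

lemma entry_swap:
  "entry (xs @ s # t # ys) = entry (xs @ t # s # ys) \<circ> transpose (length xs) (Suc (length xs))"
proof
  fix i
  show "entry (xs @ s # t # ys) i = (entry (xs @ t # s # ys) \<circ> transpose (length xs) (Suc (length xs))) i"
    by (cases "i < length xs"; cases "i = length xs"; cases "i = Suc (length xs)")
      (auto simp: entry_def transpose_def nth_append nth_Cons')
qed

lemma pleth_en_comp_bij:
  assumes "bij \<pi>"
  shows "pleth_en n (g \<circ> \<pi>) = pleth_en n g"
proof -
  let ?A = "\<lambda>g. {S. finite S \<and> card S = n \<and> (\<forall>\<alpha>\<in>S. fin_supp \<alpha>) \<and> (\<lambda>i. \<Sum>\<alpha>\<in>S. \<alpha> i) = g}"
  let ?P = "\<lambda>\<sigma> S. (\<lambda>\<alpha>::nat \<Rightarrow> nat. \<alpha> \<circ> \<sigma>) ` S"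
  have maps: "?P \<sigma> S \<in> ?A (h \<circ> \<sigma>)" if "bij \<sigma>" "S \<in> ?A h" for \<sigma> S h
  proof -
    have inj: "inj_on (\<lambda>\<alpha>::nat \<Rightarrow> nat. \<alpha> \<circ> \<sigma>) S"
      using \<open>bij \<sigma>\<close> by (auto intro!: inj_onI simp: fun_eq_iff bij_def surj_def) metis
    have "fin_supp (\<alpha> \<circ> \<sigma>)" if "fin_supp \<alpha>" for \<alpha>
    proof -
      have "{i. (\<alpha> \<circ> \<sigma>) i \<noteq> 0} = \<sigma> -` {i. \<alpha> i \<noteq> 0}" by auto
      then show ?thesis
        using finite_vimageI[of "{i. \<alpha> i \<noteq> 0}" \<sigma>] that \<open>bij \<sigma>\<close>
        by (simp only: fin_supp_def bij_def)
    qed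
    moreover have "(\<Sum>\<beta>\<in>?P \<sigma> S. \<beta> i) = h (\<sigma> i)" for i
      using \<open>S \<in> ?A h\<close> by (auto simp: sum.reindex[OF inj] fun_eq_iff)
    ultimately show ?thesis using that card_image[OF inj] by auto
  qed
  have inv: "?P \<sigma>' (?P \<sigma> S) = S" if "\<sigma> \<circ> \<sigma>' = id" for \<sigma> \<sigma>' S
    using that by (simp add: image_image comp_assoc)
  have right: "\<pi> \<circ> inv \<pi> = id" using assms bij_is_surj surj_iff by blast
  have left: "inv \<pi> \<circ> \<pi> = id" using assms bij_is_inj inj_iff by blast
  have "bij_betw (?P \<pi>) (?A g) (?A (g \<circ> \<pi>))"
  proof (rule bij_betw_byWitness[where f' = "?P (inv \<pi>)"])
    show "\<forall>S\<in>?A g. ?P (inv \<pi>) (?P \<pi> S) = S" "\<forall>S\<in>?A (g \<circ> \<pi>). ?P \<pi> (?P (inv \<pi>) S) = S"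
      using inv right left by blast+
    show "?P \<pi> ` ?A g \<subseteq> ?A (g \<circ> \<pi>)" using maps[OF assms] by blast
    show "?P (inv \<pi>) ` ?A (g \<circ> \<pi>) \<subseteq> ?A g"
      using maps[OF bij_imp_bij_inv[OF assms], of _ "g \<circ> \<pi>"] right
      by (auto simp: comp_assoc)
  qed
  then show ?thesis unfolding pleth_en_def by (simp add: bij_betw_same_card)
qed

lemma pleth_en_mset_invariant: "mset xs = mset ys \<Longrightarrow> pleth_en n (entry xs) = pleth_en n (entry ys)"
proof (rule mset_invariant_if_swap_invariant[where F = "\<lambda>g. pleth_en n (entry g)"])
  fix as s t bs
  show "pleth_en n (entry (as @ s # t # bs)) = pleth_en n (entry (as @ t # s # bs))"
    unfolding entry_swap[of as s t bs] by (rule pleth_en_comp_bij) simp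
qed

section \<open>Schur expansions of symmetric functions\<close>

lemma kostka_strips_nonzero_dominance:
  "kostka_strips lam gs \<noteq> 0 \<Longrightarrow> (\<forall>i\<ge>length gs. entry lam i = 0) \<and> sum_list lam = sum_list gs \<and>
     (\<forall>k. (\<Sum>i<k. entry (rev gs) i) \<le> (\<Sum>i<k. entry lam i))"
proof (induction gs arbitrary: lam)
  case Nil
  then have "entry lam i = 0" for i by (auto simp: entry_def split: if_splits)
  then show ?case using Nil by (simp add: entry_def split: if_splits)
next
  case (Cons r gs)
  then have "(\<Sum>mu\<in>horiz_strips lam r. kostka_strips mu gs) \<noteq> 0" by simp
  then obtain mu where mu: "mu \<in> horiz_strips lam r" and nz: "kostka_strips mu gs \<noteq> 0"
    by (rule sum.not_neutral_contains_not_neutral)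
  have h: "horiz_strip mu lam" and s: "sum_list lam = sum_list mu + r"
    using mu by (auto simp: horiz_strips_def)
  from Cons.IH[OF nz] have z: "\<forall>i\<ge>length gs. entry mu i = 0" and sm: "sum_list mu = sum_list gs"
    and d: "\<forall>k. (\<Sum>i<k. entry (rev gs) i) \<le> (\<Sum>i<k. entry mu i)" by auto
  have z2: "\<forall>i\<ge>length (r # gs). entry lam i = 0"
  proof (intro allI impI)
    fix i assume "length (r # gs) \<le> i"
    then obtain j where "i = Suc j" "length gs \<le> j" by (cases i) auto
    then show "entry lam i = 0" using horiz_strip_Suc_le[OF h, of j] z by simp
  qed
  have "(\<Sum>i<k. entry (rev (r # gs)) i) \<le> (\<Sum>i<k. entry lam i)" for k
  proof (cases "k \<le> length gs")
    case True
    have "(\<Sum>i<k. entry (rev (r # gs)) i) = (\<Sum>i<k. entry (rev gs) i)"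
      by (rule sum.cong) (use True in \<open>auto simp: entry_def nth_append\<close>)
    also have "\<dots> \<le> (\<Sum>i<k. entry mu i)" using d by simp
    also have "\<dots> \<le> (\<Sum>i<k. entry lam i)" by (rule sum_mono) (rule horiz_strip_le[OF h])
    finally show ?thesis .
  next
    case False
    then have "(\<Sum>i<k. entry (rev (r # gs)) i) = sum_list (rev (r # gs))"
      by (intro sum_entry_ge_length) simp
    also have "\<dots> = (\<Sum>i<k. entry lam i)"
      using s sm z2 False by (subst sum_entry_eq_sum_list) auto
    finally show ?thesis by simp
  qed
  then show ?case using z2 s sm by simp
qed

definition truncate :: "nat list \<Rightarrow> nat \<Rightarrow> nat list" where
  "truncate lam k = map (\<lambda>i. if i < k then lam ! i else 0) [0..<length lam]"

lemma entry_truncate: "entry (truncate lam k) i = (if i < k then entry lam i else 0)"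
  by (simp add: truncate_def entry_def)

lemma sum_list_truncate: "sum_list (truncate lam k) = (\<Sum>i<k. entry lam i)"
  by (subst sum_entry_eq_sum_list[symmetric, of k]) (auto simp: entry_truncate)

lemma truncate_horiz_strips:
  assumes "sorted_wrt (\<ge>) lam" and "k < length lam"
  shows "truncate lam k \<in> horiz_strips (truncate lam (Suc k)) (lam ! k)"
  using assms entry_sorted_Suc[OF assms(1)]
  by (auto simp: horiz_strips_def horiz_strip_def entry_truncate sum_list_truncate)
    (simp add: truncate_def entry_def)+

lemma horiz_strips_truncate_unique:
  assumes "k < length lam" and mu: "mu \<in> horiz_strips (truncate lam (Suc k)) (lam ! k)"
    and zero: "\<forall>i\<ge>k. entry mu i = 0"
  shows "mu = truncate lam k"
proof (rule eq_if_entry_le_sum_list_eq)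
  have h: "horiz_strip mu (truncate lam (Suc k))" using mu by (simp add: horiz_strips_def)
  then show "length mu = length (truncate lam k)" by (simp add: horiz_strip_def truncate_def)
  show "entry mu i \<le> entry (truncate lam k) i" for i
    using horiz_strip_le[OF h, of i] zero by (cases "i < k") (auto simp: entry_truncate)
  show "sum_list mu = sum_list (truncate lam k)"
    using mu assms(1) by (simp add: horiz_strips_def sum_list_truncate entry_def)
qed

lemma kostka_strips_truncate:
  assumes "sorted_wrt (\<ge>) lam"
  shows "k \<le> length lam \<Longrightarrow> kostka_strips (truncate lam k) (rev (take k lam)) = 1"
proof (induction k)
  case 0
  then show ?case by (simp add: sum_list_truncate)
next
  case (Suc k)
  then have k: "k < length lam" by simp
  have "kostka_strips mu (rev (take k lam)) = 0"
    if "mu \<in> horiz_strips (truncate lam (Suc k)) (lam ! k)" "mu \<noteq> truncate lam k" for mu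
    using kostka_strips_nonzero_dominance[of mu "rev (take k lam)"] k that
      horiz_strips_truncate_unique[OF k] by auto
  then have "kostka_strips (truncate lam (Suc k)) (rev (take (Suc k) lam))
      = kostka_strips (truncate lam k) (rev (take k lam))"
    using truncate_horiz_strips[OF assms k] k
    by (simp add: take_Suc_conv_app_nth sum.remove[OF finite_horiz_strips])
  then show ?case using Suc k by simp
qed

lemma kostka_diagonal:
  assumes "sorted_wrt (\<ge>) lam"
  shows "kostka lam (entry lam) = 1"
proof -
  have "truncate lam (length lam) = lam" by (rule entry_eqI) (auto simp: truncate_def entry_truncate entry_def)
  then show ?thesis
    using kostka_strips_truncate[OF assms, of "length lam"] kostka_eq_kostka_strips[OF assms] by simp
qed

lemma unitriangular_solvable:
  fixes K :: "'a \<Rightarrow> 'a \<Rightarrow> 'b::comm_ring_1" and rk :: "'a \<Rightarrow> nat"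
  assumes "finite P" and diag: "\<And>l. l \<in> P \<Longrightarrow> K l l = 1"
    and tri: "\<And>l m. l \<in> P \<Longrightarrow> m \<in> P \<Longrightarrow> K l m \<noteq> 0 \<Longrightarrow> l \<noteq> m \<Longrightarrow> rk m < rk l"
  shows "\<exists>c. \<forall>m\<in>P. f m = (\<Sum>l\<in>P. c l * K l m)"
proof -
  have "\<forall>f. \<exists>c. \<forall>m\<in>S. f m = (\<Sum>l\<in>S. c l * K l m)" if "finite S" "S \<subseteq> P" for S
    using that
  proof (induction S rule: finite_ranking_induct[where f = rk])
    case (insert x S)
    show ?case
    proof (cases "x \<in> S")
      case True
      then have "insert x S = S" by blast
      then show ?thesis using insert.IH insert.prems by simp
    next
      case False
      show ?thesis
      proof
        fix f
        have "S \<subseteq> P" using insert.prems by blast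
        then obtain c where c: "\<forall>m\<in>S. f m - f x * K x m = (\<Sum>l\<in>S. c l * K l m)"
          using spec[OF insert.IH, of "\<lambda>m. f m - f x * K x m"] by auto
        have col: "K l x = 0" if "l \<in> S" for l
          using tri[of l x] insert.hyps(2)[OF that] insert.prems that False by fastforce
        have "f m = (\<Sum>l\<in>insert x S. (c(x := f x)) l * K l m)" if "m \<in> insert x S" for m
        proof -
          have "(\<Sum>l\<in>S. (c(x := f x)) l * K l m) = (\<Sum>l\<in>S. c l * K l m)"
            using False by (intro sum.cong) auto
          then have "(\<Sum>l\<in>insert x S. (c(x := f x)) l * K l m) = f x * K x m + (\<Sum>l\<in>S. c l * K l m)"
            using insert.hyps(1) False by simp
          moreover have "f m = f x * K x m + (\<Sum>l\<in>S. c l * K l m)"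
          proof (cases "m = x")
            case True then show ?thesis using col diag[of x] insert.prems by simp
          next
            case False
            then have "m \<in> S" using that by simp
            then show ?thesis using c by (simp add: diff_eq_eq add.commute)
          qed
          ultimately show ?thesis by simp
        qed
        then show "\<exists>c. \<forall>m\<in>insert x S. f m = (\<Sum>l\<in>insert x S. c l * K l m)" by blast
      qed
    qed
  qed simp
  then show ?thesis using assms(1) by blast
qed

definition partitions :: "nat \<Rightarrow> nat list set" where
  "partitions m = {lam. is_partition lam \<and> sum_list lam = m}"

lemma partition_length_le: "is_partition xs \<Longrightarrow> length xs \<le> sum_list xs"
  by (induction xs) (auto simp: is_partition_def)

lemma finite_partitions: "finite (partitions m)"
proof (rule finite_subset)
  show "partitions m \<subseteq> {xs. set xs \<subseteq> {0..m} \<and> length xs \<le> m}"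
    by (auto simp: partitions_def partition_length_le member_le_sum_list)
qed (rule finite_lists_length_le, simp)

lemma partition_sorted: "is_partition xs \<Longrightarrow> sorted_wrt (\<ge>) xs"
  by (simp add: is_partition_def)

lemma partition_entry_pos: "is_partition xs \<Longrightarrow> i < length xs \<Longrightarrow> 0 < entry xs i"
  by (auto simp: is_partition_def entry_def)

lemma partition_eqI:
  assumes "is_partition lam" and "is_partition mu" and "\<And>i. entry lam i = entry mu i"
  shows "lam = mu"
proof (rule entry_eqI[OF _ assms(3)])
  show "length lam = length mu"
    using partition_entry_pos[OF assms(1), of "length mu"] partition_entry_pos[OF assms(2), of "length lam"]
      assms(3)[of "length mu"] assms(3)[of "length lam"]
    by (auto simp: entry_def split: if_splits)
qed

text \<open>A linear extension of the dominance order on partitions of \<open>m\<close>.\<close>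

definition dominance_rank :: "nat \<Rightarrow> nat list \<Rightarrow> nat" where
  "dominance_rank m mu = (\<Sum>k<Suc m. \<Sum>i<k. entry mu i)"

lemma kostka_nonzero_rank_less:
  assumes lam: "lam \<in> partitions m" and mu: "mu \<in> partitions m"
    and nz: "kostka lam (entry mu) \<noteq> 0" and ne: "lam \<noteq> mu"
  shows "dominance_rank m mu < dominance_rank m lam"
proof -
  have pl: "is_partition lam" "sum_list lam = m" and pu: "is_partition mu" "sum_list mu = m"
    using lam mu by (auto simp: partitions_def)
  have "kostka_strips lam (rev mu) \<noteq> 0"
    using nz kostka_eq_kostka_strips[OF partition_sorted[OF pl(1)]] by simp
  from kostka_strips_nonzero_dominance[OF this]
  have d: "\<forall>k. (\<Sum>i<k. entry mu i) \<le> (\<Sum>i<k. entry lam i)" by simp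
  have "\<exists>k\<in>{..<Suc m}. (\<Sum>i<k. entry mu i) < (\<Sum>i<k. entry lam i)"
  proof (rule ccontr)
    assume "\<not> ?thesis"
    then have eq: "(\<Sum>i<k. entry mu i) = (\<Sum>i<k. entry lam i)" if "k \<le> m" for k
      using d that by (metis le_antisym lessThan_iff less_Suc_eq_le not_le)
    have "entry mu i = entry lam i" for i
    proof (cases "i < m")
      case True then show ?thesis using eq[of i] eq[of "Suc i"] by simp
    next
      case False
      then show ?thesis
        using partition_length_le[OF pl(1)] partition_length_le[OF pu(1)] pl(2) pu(2)
        by (simp add: entry_def)
    qed
    then show False using partition_eqI[OF pu(1) pl(1)] ne by simp
  qed
  then show ?thesis unfolding dominance_rank_def
    by (intro sum_strict_mono_ex1) (use d in auto)
qed

lemma deg_entry: "deg (entry g) = sum_list g"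
proof -
  have "deg (entry g) = (\<Sum>i<length g. entry g i)"
    unfolding deg_def by (rule sum.mono_neutral_left) (auto simp: entry_def split: if_splits)
  then show ?thesis by (simp add: sum_list_eq_sum_entry)
qed

lemma fin_supp_entry: "fin_supp (entry g)"
proof -
  have "{i. entry g i \<noteq> 0} \<subseteq> {..<length g}" by (auto simp: entry_def split: if_splits)
  then show ?thesis by (simp add: fin_supp_def finite_subset)
qed

lemma fin_supp_imp_entry: "fin_supp g \<Longrightarrow> \<exists>xs. g = entry xs"
proof -
  assume "fin_supp g"
  then obtain N where N: "\<forall>i. g i \<noteq> 0 \<longrightarrow> i < N"
    by (auto simp: fin_supp_def finite_nat_set_iff_bounded)
  have "g = entry (map g [0..<N])"
    using N by (auto simp: entry_def fun_eq_iff)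
  then show ?thesis by blast
qed

lemma entry_filter_pos: "sorted_wrt (\<ge>) ys \<Longrightarrow> entry (filter (\<lambda>x. 0 < x) ys) = entry ys"
proof (induction ys)
  case (Cons y ys)
  show ?case
  proof (cases "0 < y")
    case True
    have IH: "entry (filter (\<lambda>x. 0 < x) ys) = entry ys" using Cons by simp
    show ?thesis
    proof
      fix i show "entry (filter (\<lambda>x. 0 < x) (y # ys)) i = entry (y # ys) i"
        using True fun_cong[OF IH, of "i - 1"] by (cases i) (auto simp: entry_def)
    qed
  next
    case False
    then have zero: "\<forall>x\<in>set (y # ys). x = 0" using Cons.prems by auto
    then have "entry (y # ys) i = 0" for i
      using nth_mem[of i "y # ys"] by (auto simp: entry_def simp del: nth_Cons_Suc)
    moreover have "filter (\<lambda>x. 0 < x) (y # ys) = []" using zero by (auto simp: filter_empty_conv)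
    ultimately show ?thesis by (simp add: fun_eq_iff entry_def)
  qed
qed simp

lemma sum_list_filter_pos: "sum_list (filter (\<lambda>x. 0 < x) xs) = (sum_list xs :: nat)"
  by (induction xs) auto

lemma exists_partition_rearrangement:
  "\<exists>ys mu. mset ys = mset xs \<and> entry ys = entry mu \<and> mu \<in> partitions (sum_list xs)"
proof (intro exI conjI)
  let ?ys = "rev (sort xs)"
  have sorted: "sorted_wrt (\<ge>) ?ys" by (simp add: sorted_wrt_rev)
  show "mset ?ys = mset xs" by simp
  show "entry ?ys = entry (filter (\<lambda>x. 0 < x) ?ys)" by (rule entry_filter_pos[OF sorted, symmetric])
  have "sum_list (filter (\<lambda>x. 0 < x) ?ys) = sum_list ?ys" by (rule sum_list_filter_pos)
  also have "\<dots> = sum_list xs" by (metis mset_rev mset_sort sum_mset_sum_list)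
  finally show "filter (\<lambda>x. 0 < x) ?ys \<in> partitions (sum_list xs)"
    using sorted_wrt_filter[OF sorted] by (auto simp: partitions_def is_partition_def)
qed

theorem schur_expansion_exists:
  assumes sym: "\<And>xs ys. mset xs = mset ys \<Longrightarrow> f (entry xs) = f (entry ys)"
  shows "\<exists>c. schur_expansion f c"
proof -
  let ?K = "\<lambda>lam mu. int (kostka lam (entry mu))"
  have "\<exists>c. \<forall>mu\<in>partitions m. f (entry mu) = (\<Sum>lam\<in>partitions m. c lam * ?K lam mu)" for m
  proof (rule unitriangular_solvable[OF finite_partitions, where rk = "dominance_rank m"])
    show "?K lam lam = 1" if "lam \<in> partitions m" for lam
      using that kostka_diagonal partition_sorted by (simp add: partitions_def)
  qed (use kostka_nonzero_rank_less in auto)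
  then obtain C
    where C: "\<And>m. \<forall>mu\<in>partitions m. f (entry mu) = (\<Sum>lam\<in>partitions m. C m lam * ?K lam mu)"
    by metis
  have "f g = (\<Sum>lam\<in>partitions (deg g). C (sum_list lam) lam * int (kostka lam g))"
    if "fin_supp g" for g
  proof -
    obtain xs where g: "g = entry xs" using fin_supp_imp_entry[OF \<open>fin_supp g\<close>] by blast
    obtain ys mu where ys: "mset ys = mset xs" "entry ys = entry mu"
      and mu: "mu \<in> partitions (sum_list xs)"
      using exists_partition_rearrangement by blast
    have "f g = f (entry mu)" using sym[OF ys(1)] ys(2) g by simp
    also have "\<dots> = (\<Sum>lam\<in>partitions (sum_list xs). C (sum_list xs) lam * ?K lam mu)"
      using C mu by blast
    also have "\<dots> = (\<Sum>lam\<in>partitions (deg g). C (sum_list lam) lam * int (kostka lam g))"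
      using kostka_mset_invariant[OF partition_sorted ys(1)] g ys(2)
      by (intro sum.cong) (auto simp: deg_entry partitions_def)
    finally show ?thesis .
  qed
  then have "schur_expansion f (\<lambda>lam. C (sum_list lam) lam)"
    by (simp add: schur_expansion_def partitions_def)
  then show ?thesis by blast
qed

lemma horiz_strip_sorted_outer: "horiz_strip mu lam \<Longrightarrow> sorted_wrt (\<ge>) lam"
  by (rule sorted_if_entry_Suc_le) (meson horiz_strip_Suc_le horiz_strip_le le_trans)

lemma kostka_strips_nonzero_sorted:
  assumes "kostka_strips mu gs \<noteq> 0"
  shows "sorted_wrt (\<ge>) mu"
proof (cases gs)
  case Nil
  then have "entry mu i = 0" for i using assms by (auto simp: entry_def split: if_splits)
  then show ?thesis by (intro sorted_if_entry_Suc_le) simp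
next
  case (Cons r gs')
  then have "(\<Sum>nu\<in>horiz_strips mu r. kostka_strips nu gs') \<noteq> 0" using assms by simp
  then obtain nu where "nu \<in> horiz_strips mu r" by (rule sum.not_neutral_contains_not_neutral)
  then show ?thesis by (auto simp: horiz_strips_def intro: horiz_strip_sorted_outer)
qed

section \<open>Skewing by elementary symmetric functions\<close>

text \<open>If \<open>F\<close> is the coefficient function of a symmetric function f, then \<open>skew_e_coeff F g j\<close> is
  the coefficient of x^g in e_j^\<perp> f: the recursion unfolds e_j = \<Sum>_(r=1..j) (-1)^(r-1) h_r e_(j-r),
  and the coefficient of x^g in h_r^\<perp> f is \<open>F (g @ [r])\<close>.\<close>

fun skew_e_coeff :: "(nat list \<Rightarrow> int) \<Rightarrow> nat list \<Rightarrow> nat \<Rightarrow> int" where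
  "skew_e_coeff F g 0 = F g"
| "skew_e_coeff F g (Suc j) =
     (\<Sum>r\<in>{1..Suc j}. (-1) ^ (r - 1) * skew_e_coeff F (g @ [r]) (Suc j - r))"

lemma skew_e_coeff_Suc: "0 < j \<Longrightarrow>
    skew_e_coeff F g j = (\<Sum>r\<in>{1..j}. (-1) ^ (r - 1) * skew_e_coeff F (g @ [r]) (j - r))"
  by (cases j) simp_all

lemma skew_e_coeff_linear:
  assumes F: "\<And>g. F g = (\<Sum>l\<in>partitions (sum_list g). c l * G l g)"
  shows "skew_e_coeff F g j = (\<Sum>l\<in>partitions (sum_list g + j). c l * skew_e_coeff (G l) g j)"
proof (induction j arbitrary: g rule: less_induct)
  case (less j)
  show ?case
  proof (cases "j = 0")
    case True then show ?thesis using F by simp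
  next
    case False
    let ?P = "partitions (sum_list g + j)"
    have "skew_e_coeff F (g @ [r]) (j - r) = (\<Sum>l\<in>?P. c l * skew_e_coeff (G l) (g @ [r]) (j - r))"
      if "r \<in> {1..j}" for r
      using less.IH[of "j - r" "g @ [r]"] that by simp
    then have "skew_e_coeff F g j
        = (\<Sum>r\<in>{1..j}. \<Sum>l\<in>?P. c l * ((-1) ^ (r - 1) * skew_e_coeff (G l) (g @ [r]) (j - r)))"
      using False by (simp add: skew_e_coeff_Suc sum_distrib_left mult.left_commute)
    also have "\<dots> = (\<Sum>l\<in>?P. c l * skew_e_coeff (G l) g j)"
      using False by (subst sum.swap) (simp add: skew_e_coeff_Suc sum_distrib_left)
    finally show ?thesis .
  qed
qed

lemma sum_eq_0_if_sign_reversing_involution: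
  fixes s :: "'a \<Rightarrow> int"
  assumes "finite A" and "\<And>x. x \<in> A \<Longrightarrow> \<sigma> x \<in> A" and "\<And>x. x \<in> A \<Longrightarrow> \<sigma> (\<sigma> x) = x"
    and "\<And>x. x \<in> A \<Longrightarrow> s (\<sigma> x) = - s x"
  shows "(\<Sum>x\<in>A. s x) = 0"
proof -
  have "bij_betw \<sigma> A A" by (rule bij_betw_byWitness[where f' = \<sigma>]) (use assms in blast)+
  then have "(\<Sum>x\<in>A. s x) = (\<Sum>x\<in>A. s (\<sigma> x))" by (rule sum.reindex_bij_betw[symmetric])
  also have "\<dots> = - (\<Sum>x\<in>A. s x)" using assms(4) by (simp add: sum_negf)
  finally show ?thesis by simp
qed

lemma sum_sign_eq_sum_card_fibres:
  fixes f :: "'a \<Rightarrow> nat"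
  assumes "finite A" and "\<And>x. x \<in> A \<Longrightarrow> f x \<le> J"
  shows "(\<Sum>x\<in>A. (-1::int) ^ f x) = (\<Sum>r\<in>{0..J}. (-1) ^ r * int (card {x \<in> A. f x = r}))"
proof -
  have "(\<Sum>x\<in>A. (-1::int) ^ f x) = (\<Sum>r\<in>{0..J}. \<Sum>x\<in>{x \<in> A. f x = r}. (-1::int) ^ f x)"
    by (rule sum.group[symmetric]) (use assms in auto)
  also have "\<dots> = (\<Sum>r\<in>{0..J}. \<Sum>x\<in>{x \<in> A. f x = r}. (-1::int) ^ r)"
    by (intro sum.cong) auto
  finally show ?thesis by (simp add: mult.commute)
qed

lemma alternating_sum_shift:
  fixes c :: "nat \<Rightarrow> int"
  assumes "(\<Sum>r\<in>{0..J}. (-1) ^ r * c r) = 0"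
  shows "(\<Sum>r\<in>{1..J}. (-1) ^ (r - 1) * c r) = c 0"
proof -
  have "(-1) ^ (r - 1) * c r = - ((-1) ^ r * c r)" if "r \<in> {1..J}" for r
    using that by (cases r) auto
  then have "(\<Sum>r\<in>{1..J}. (-1) ^ (r - 1) * c r) = - (\<Sum>r\<in>{1..J}. (-1) ^ r * c r)"
    unfolding sum_negf[symmetric] by (rule sum.cong[OF refl])
  moreover have "(\<Sum>r\<in>{0..J}. (-1) ^ r * c r) = c 0 + (\<Sum>r\<in>{1..J}. (-1) ^ r * c r)"
    using sum.atLeast_Suc_atMost[of 0 J "\<lambda>r. (-1) ^ r * c r"] by simp
  ultimately show ?thesis using assms by simp
qed

definition vert_strip :: "nat list \<Rightarrow> nat list \<Rightarrow> bool" where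
  "vert_strip mu lam \<longleftrightarrow> length mu = length lam \<and>
     (\<forall>i<length lam. entry mu i \<le> entry lam i \<and> entry lam i \<le> Suc (entry mu i))"

definition vert_strips :: "nat list \<Rightarrow> nat \<Rightarrow> nat list set" where
  "vert_strips lam j = {mu. vert_strip mu lam \<and> sum_list lam = sum_list mu + j}"

lemma vert_strip_le: "vert_strip mu lam \<Longrightarrow> entry mu i \<le> entry lam i"
  by (cases "i < length lam") (auto simp: vert_strip_def entry_def)

lemma vert_strip_sum_list_le: "vert_strip mu lam \<Longrightarrow> sum_list mu \<le> sum_list lam"
  by (simp add: vert_strip_def vert_strip_le sum_list_le_if_entry_le)

lemma vert_strip_bounded: "vert_strip mu lam \<Longrightarrow> mu \<in> bounded_lists lam"
  by (rule bounded_listsI) (auto simp: vert_strip_def vert_strip_le)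

lemma finite_vert_strips: "finite (vert_strips lam j)"
  by (rule finite_subset[OF _ finite_bounded_lists[of lam]])
    (auto simp: vert_strips_def vert_strip_bounded)

lemma vert_strips_0: "vert_strips lam 0 = {lam}"
  by (auto simp: vert_strips_def vert_strip_def vert_strip_le
      intro: eq_if_entry_le_sum_list_eq[where ys = lam])

definition hv_shapes :: "nat list \<Rightarrow> nat list \<Rightarrow> nat list set" where
  "hv_shapes mu lam = {nu. horiz_strip mu nu \<and> vert_strip nu lam}"

lemma finite_hv_shapes: "finite (hv_shapes mu lam)"
  by (rule finite_subset[OF _ finite_bounded_lists[of lam]])
    (auto simp: hv_shapes_def vert_strip_bounded)

definition toggle_box :: "nat list \<Rightarrow> nat \<Rightarrow> nat list \<Rightarrow> nat list" where
  "toggle_box lam i nu = nu[i := (if entry nu i = entry lam i then entry lam i - 1 else entry lam i)]"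

lemma length_toggle_box [simp]: "length (toggle_box lam i nu) = length nu"
  by (simp add: toggle_box_def)

lemma entry_toggle_box:
  "i < length nu \<Longrightarrow> entry (toggle_box lam i nu) k =
     (if k = i then (if entry nu i = entry lam i then entry lam i - 1 else entry lam i) else entry nu k)"
  by (auto simp: toggle_box_def entry_def)

lemma toggle_box_hv_shapes:
  assumes lam: "sorted_wrt (\<ge>) lam" and gap: "entry mu i < entry lam i"
    and before: "\<forall>k<i. entry lam k \<le> entry mu k" and nu: "nu \<in> hv_shapes mu lam"
  shows "toggle_box lam i nu \<in> hv_shapes mu lam"
    and "toggle_box lam i (toggle_box lam i nu) = nu"
    and "sum_list (toggle_box lam i nu) = sum_list nu + 1 \<or> sum_list nu = sum_list (toggle_box lam i nu) + 1"
proof -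
  have h: "horiz_strip mu nu" and v: "vert_strip nu lam" using nu by (auto simp: hv_shapes_def)
  have i: "i < length nu" using gap v by (auto simp: vert_strip_def entry_def split: if_splits)
  have nu_i: "entry nu i \<le> entry lam i" "entry lam i \<le> Suc (entry nu i)"
    using v i by (auto simp: vert_strip_def)
  note T = entry_toggle_box[OF i]
  have "horiz_strip mu (toggle_box lam i nu)"
    unfolding horiz_strip_def
  proof (intro conjI allI impI)
    show "length mu = length (toggle_box lam i nu)" using h by (simp add: horiz_strip_def)
    fix k assume k: "k < length (toggle_box lam i nu)"
    show "entry mu k \<le> entry (toggle_box lam i nu) k"
      using h k gap by (auto simp: T horiz_strip_def)
    have "entry lam i \<le> entry mu k" if "Suc k = i"
      using before entry_sorted_Suc[OF lam, of k] that by force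
    then show "entry (toggle_box lam i nu) (Suc k) \<le> entry mu k"
      using h k by (auto simp: T horiz_strip_def)
  qed
  moreover have "vert_strip (toggle_box lam i nu) lam"
    using v nu_i by (auto simp: vert_strip_def T)
  ultimately show "toggle_box lam i nu \<in> hv_shapes mu lam" by (simp add: hv_shapes_def)
  show "toggle_box lam i (toggle_box lam i nu) = nu"
    using i nu_i by (intro entry_eqI) (auto simp: entry_toggle_box)
  have "nu ! i = entry nu i" using i by (simp add: entry_def)
  then show "sum_list (toggle_box lam i nu) = sum_list nu + 1 \<or> sum_list nu = sum_list (toggle_box lam i nu) + 1"
    using i nu_i gap entry_le_sum_list[of nu i] by (auto simp: toggle_box_def sum_list_update)
qed

lemma sum_sign_hv_shapes:
  assumes lam: "sorted_wrt (\<ge>) lam" and gap: "\<exists>i. entry mu i < entry lam i"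
  shows "(\<Sum>nu\<in>hv_shapes mu lam. (-1::int) ^ (sum_list nu - sum_list mu)) = 0"
proof -
  define i where "i = (LEAST i. entry mu i < entry lam i)"
  have i: "entry mu i < entry lam i" unfolding i_def by (rule LeastI_ex[OF gap])
  have before: "\<forall>k<i. entry lam k \<le> entry mu k"
    using not_less_Least[of _ "\<lambda>i. entry mu i < entry lam i"] by (auto simp: i_def not_less)
  show ?thesis
  proof (rule sum_eq_0_if_sign_reversing_involution[OF finite_hv_shapes, where \<sigma> = "toggle_box lam i"])
    fix nu assume "nu \<in> hv_shapes mu lam"
    note T = toggle_box_hv_shapes[OF lam i before this]
    show "toggle_box lam i nu \<in> hv_shapes mu lam" by (rule T(1))
    show "toggle_box lam i (toggle_box lam i nu) = nu" by (rule T(2))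
    have "sum_list mu \<le> sum_list nu" "sum_list mu \<le> sum_list (toggle_box lam i nu)"
      using \<open>nu \<in> hv_shapes mu lam\<close> T(1) by (auto simp: hv_shapes_def horiz_strip_sum_list_le)
    then show "(-1::int) ^ (sum_list (toggle_box lam i nu) - sum_list mu)
        = - ((-1) ^ (sum_list nu - sum_list mu))"
      using T(3) by (auto simp: Suc_diff_le)
  qed
qed

lemma alternating_count_hv_shapes:
  assumes lam: "sorted_wrt (\<ge>) lam" and mu: "sorted_wrt (\<ge>) mu" and len: "length mu = length lam"
    and size: "sum_list lam = sum_list mu + J" and J: "0 < J"
  shows "(\<Sum>r\<in>{1..J}. (-1) ^ (r - 1) * int (card {nu \<in> hv_shapes mu lam. sum_list nu - sum_list mu = r}))
    = (if vert_strip mu lam then 1 else 0)"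
proof -
  have gap: "\<exists>i. entry mu i < entry lam i"
  proof (rule ccontr)
    assume "\<not> ?thesis"
    then have "sum_list lam \<le> sum_list mu" using len by (intro sum_list_le_if_entry_le) (auto simp: not_less)
    then show False using size J by simp
  qed
  have "sum_list nu - sum_list mu \<le> J" if "nu \<in> hv_shapes mu lam" for nu
    using that size vert_strip_sum_list_le[of nu lam] by (auto simp: hv_shapes_def)
  then have "(\<Sum>nu\<in>hv_shapes mu lam. (-1::int) ^ (sum_list nu - sum_list mu))
      = (\<Sum>r\<in>{0..J}. (-1) ^ r * int (card {nu \<in> hv_shapes mu lam. sum_list nu - sum_list mu = r}))"
    by (rule sum_sign_eq_sum_card_fibres[OF finite_hv_shapes])
  then have "(\<Sum>r\<in>{0..J}. (-1) ^ r * int (card {nu \<in> hv_shapes mu lam. sum_list nu - sum_list mu = r})) = 0"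
    using sum_sign_hv_shapes[OF lam gap] by simp
  then have shift: "(\<Sum>r\<in>{1..J}. (-1) ^ (r - 1) * int (card {nu \<in> hv_shapes mu lam. sum_list nu - sum_list mu = r}))
      = int (card {nu \<in> hv_shapes mu lam. sum_list nu - sum_list mu = 0})"
    by (rule alternating_sum_shift[where c = "\<lambda>r. int (card {nu \<in> hv_shapes mu lam. sum_list nu - sum_list mu = r})"])
  have "nu = mu" if "nu \<in> hv_shapes mu lam" "sum_list nu - sum_list mu = 0" for nu
  proof -
    have h: "horiz_strip mu nu" using that(1) by (simp add: hv_shapes_def)
    then have "sum_list mu = sum_list nu" using that(2) horiz_strip_sum_list_le[OF h] by simp
    then show ?thesis
      using h by (intro eq_if_entry_le_sum_list_eq[symmetric]) (auto simp: horiz_strip_def horiz_strip_le)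
  qed
  then have "{nu \<in> hv_shapes mu lam. sum_list nu - sum_list mu = 0} = (if vert_strip mu lam then {mu} else {})"
    using horiz_strip_self[OF mu] by (auto simp: hv_shapes_def)
  then show ?thesis unfolding shift by simp
qed

lemma alternating_count_strips:
  assumes lam: "sorted_wrt (\<ge>) lam" and mu: "sorted_wrt (\<ge>) mu" and len: "length mu = length lam"
    and J: "0 < J"
  shows "(\<Sum>r\<in>{1..J}. (-1) ^ (r - 1) * int (card {nu \<in> vert_strips lam (J - r). mu \<in> horiz_strips nu r}))
    = (if mu \<in> vert_strips lam J then 1 else 0)"
proof (cases "sum_list lam = sum_list mu + J")
  case True
  have "{nu \<in> vert_strips lam (J - r). mu \<in> horiz_strips nu r}
      = {nu \<in> hv_shapes mu lam. sum_list nu - sum_list mu = r}" if "r \<in> {1..J}" for r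
  proof (intro set_eqI iffI)
    fix nu assume "nu \<in> {nu \<in> vert_strips lam (J - r). mu \<in> horiz_strips nu r}"
    then show "nu \<in> {nu \<in> hv_shapes mu lam. sum_list nu - sum_list mu = r}"
      by (auto simp: vert_strips_def horiz_strips_def hv_shapes_def)
  next
    fix nu assume nu: "nu \<in> {nu \<in> hv_shapes mu lam. sum_list nu - sum_list mu = r}"
    then have "sum_list mu \<le> sum_list nu"
      using horiz_strip_sum_list_le[of mu nu] by (simp add: hv_shapes_def)
    then show "nu \<in> {nu \<in> vert_strips lam (J - r). mu \<in> horiz_strips nu r}"
      using nu that True by (auto simp: vert_strips_def horiz_strips_def hv_shapes_def)
  qed
  then show ?thesis
    using alternating_count_hv_shapes[OF lam mu len True J] True by (simp add: vert_strips_def)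
next
  case False
  then have empty: "{nu \<in> vert_strips lam (J - r). mu \<in> horiz_strips nu r} = {}" if "r \<in> {1..J}" for r
    using that by (auto simp: vert_strips_def horiz_strips_def)
  have "(\<Sum>r\<in>{1..J}. (-1) ^ (r - 1) * int (card {nu \<in> vert_strips lam (J - r). mu \<in> horiz_strips nu r})) = 0"
    by (intro sum.neutral ballI) (simp add: empty)
  moreover have "mu \<notin> vert_strips lam J" using False by (simp add: vert_strips_def)
  ultimately show ?thesis by simp
qed

lemma horiz_strips_vert_strips_bounded:
  assumes "nu \<in> vert_strips lam k"
  shows "horiz_strips nu r \<subseteq> bounded_lists lam"
proof
  fix mu assume "mu \<in> horiz_strips nu r"
  then have h: "horiz_strip mu nu" by (simp add: horiz_strips_def)
  have v: "vert_strip nu lam" using assms by (simp add: vert_strips_def)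
  show "mu \<in> bounded_lists lam"
  proof (rule bounded_listsI)
    show "length mu = length lam" using h v by (simp add: horiz_strip_def vert_strip_def)
    show "entry mu i \<le> entry lam i" for i
      using horiz_strip_le[OF h, of i] vert_strip_le[OF v, of i] by simp
  qed
qed

lemma sum_alternating_count_strips:
  fixes K :: "nat list \<Rightarrow> int"
  assumes lam: "sorted_wrt (\<ge>) lam" and J: "0 < J" and K: "\<And>mu. K mu \<noteq> 0 \<Longrightarrow> sorted_wrt (\<ge>) mu"
  shows "(\<Sum>mu\<in>bounded_lists lam.
      (\<Sum>r\<in>{1..J}. (-1) ^ (r - 1) * int (card {nu \<in> vert_strips lam (J - r). mu \<in> horiz_strips nu r})) * K mu)
    = (\<Sum>mu\<in>vert_strips lam J. K mu)"
proof -
  have "(\<Sum>r\<in>{1..J}. (-1) ^ (r - 1) * int (card {nu \<in> vert_strips lam (J - r). mu \<in> horiz_strips nu r})) * K mu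
      = (if mu \<in> vert_strips lam J then K mu else 0)" if "mu \<in> bounded_lists lam" for mu
    using that alternating_count_strips[OF lam K _ J] by (cases "K mu = 0") (auto simp: bounded_lists_def)
  then have "(\<Sum>mu\<in>bounded_lists lam.
      (\<Sum>r\<in>{1..J}. (-1) ^ (r - 1) * int (card {nu \<in> vert_strips lam (J - r). mu \<in> horiz_strips nu r})) * K mu)
      = (\<Sum>mu\<in>bounded_lists lam. if mu \<in> vert_strips lam J then K mu else 0)"
    by (rule sum.cong[OF refl])
  also have "\<dots> = (\<Sum>mu\<in>vert_strips lam J. K mu)"
    using finite_bounded_lists vert_strip_bounded
    by (simp add: sum.If_cases Int_absorb1 subset_iff vert_strips_def)
  finally show ?thesis .
qed

lemma skew_e_coeff_kostka:
  assumes lam: "sorted_wrt (\<ge>) lam"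
  shows "skew_e_coeff (\<lambda>g. int (kostka_strips lam (rev g))) g j
    = (\<Sum>mu\<in>vert_strips lam j. int (kostka_strips mu (rev g)))"
proof (induction j arbitrary: g rule: less_induct)
  case (less J)
  show ?case
  proof (cases "J = 0")
    case True then show ?thesis by (simp add: vert_strips_0)
  next
    case False
    let ?F = "\<lambda>g. int (kostka_strips lam (rev g))" and ?K = "\<lambda>mu. int (kostka_strips mu (rev g))"
    let ?C = "\<lambda>mu r. int (card {nu \<in> vert_strips lam (J - r). mu \<in> horiz_strips nu r})"
    have step: "skew_e_coeff ?F (g @ [r]) (J - r) = (\<Sum>mu\<in>bounded_lists lam. ?C mu r * ?K mu)"
      if "r \<in> {1..J}" for r
    proof -
      have "skew_e_coeff ?F (g @ [r]) (J - r) = (\<Sum>nu\<in>vert_strips lam (J - r). \<Sum>mu\<in>horiz_strips nu r. ?K mu)"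
        using less.IH[of "J - r" "g @ [r]"] that by (simp add: of_nat_sum)
      also have "\<dots> = (\<Sum>mu\<in>bounded_lists lam. ?C mu r * ?K mu)"
        by (rule sum_sum_eq_sum_card_mult[OF finite_vert_strips finite_bounded_lists
              horiz_strips_vert_strips_bounded])
      finally show ?thesis .
    qed
    have "skew_e_coeff ?F g J = (\<Sum>r\<in>{1..J}. (-1) ^ (r - 1) * skew_e_coeff ?F (g @ [r]) (J - r))"
      using False by (simp add: skew_e_coeff_Suc)
    also have "\<dots> = (\<Sum>r\<in>{1..J}. \<Sum>mu\<in>bounded_lists lam. (-1) ^ (r - 1) * ?C mu r * ?K mu)"
      using step by (simp add: sum_distrib_left mult.assoc)
    also have "\<dots> = (\<Sum>mu\<in>bounded_lists lam. (\<Sum>r\<in>{1..J}. (-1) ^ (r - 1) * ?C mu r) * ?K mu)"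
      by (subst sum.swap) (simp add: sum_distrib_right)
    also have "\<dots> = (\<Sum>mu\<in>vert_strips lam J. ?K mu)"
      using False by (intro sum_alternating_count_strips[OF lam]) (auto intro: kostka_strips_nonzero_sorted)
    finally show ?thesis .
  qed
qed

section \<open>The plethysm side\<close>

type_synonym config = "(nat \<Rightarrow> nat) set \<times> (nat \<Rightarrow> nat) multiset"

definition set_content :: "(nat \<Rightarrow> nat) set \<Rightarrow> nat \<Rightarrow> nat" where
  "set_content S i = (\<Sum>\<alpha>\<in>S. \<alpha> i)"

definition mset_content :: "(nat \<Rightarrow> nat) multiset \<Rightarrow> nat \<Rightarrow> nat" where
  "mset_content Q i = (\<Sum>\<alpha>\<in>#Q. \<alpha> i)"

definition content :: "config \<Rightarrow> nat \<Rightarrow> nat" where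
  "content p i = set_content (fst p) i + mset_content (snd p) i"

definition configs :: "nat \<Rightarrow> nat list \<Rightarrow> nat \<Rightarrow> config set" where
  "configs n g j = {p. finite (fst p) \<and> card (fst p) + size (snd p) = n \<and> size (snd p) = j
      \<and> (\<forall>i. content p i = entry g i)}"

lemma mset_content_add_mset: "mset_content (add_mset a Q) i = a i + mset_content Q i"
  by (simp add: mset_content_def)

lemma set_content_insert: "finite S \<Longrightarrow> a \<notin> S \<Longrightarrow> set_content (insert a S) i = a i + set_content S i"
  by (simp add: set_content_def)

lemma le_set_content: "finite S \<Longrightarrow> a \<in> S \<Longrightarrow> a i \<le> set_content S i"
  unfolding set_content_def by (rule member_le_sum) auto

lemma le_mset_content: "a \<in># Q \<Longrightarrow> a i \<le> mset_content Q i"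
  by (metis insert_DiffM le_add1 mset_content_add_mset)

lemma le_content:
  assumes "finite (fst p)" and "\<alpha> \<in> fst p \<or> \<alpha> \<in># snd p"
  shows "\<alpha> i \<le> content p i"
  using assms(2)
proof
  assume "\<alpha> \<in> fst p"
  then have "\<alpha> i \<le> set_content (fst p) i" by (rule le_set_content[OF assms(1)])
  then show ?thesis by (simp add: content_def trans_le_add1)
next
  assume "\<alpha> \<in># snd p"
  then have "\<alpha> i \<le> mset_content (snd p) i" by (rule le_mset_content)
  then show ?thesis by (simp add: content_def trans_le_add2)
qed

lemma finite_monomials_below: "finite {\<alpha>::nat \<Rightarrow> nat. \<forall>i. \<alpha> i \<le> entry h i}"
proof (rule finite_subset)
  show "{\<alpha>::nat \<Rightarrow> nat. \<forall>i. \<alpha> i \<le> entry h i} \<subseteq>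
      {f. \<forall>x. (x \<in> {..<length h} \<longrightarrow> f x \<in> {..sum_list h}) \<and> (x \<notin> {..<length h} \<longrightarrow> f x = 0)}"
  proof (clarsimp, intro conjI allI impI)
    fix \<alpha> :: "nat \<Rightarrow> nat" and x assume "\<forall>i. \<alpha> i \<le> entry h i"
    then have "\<alpha> x \<le> entry h x" by blast
    then show "\<alpha> x \<le> sum_list h" using entry_le_sum_list[of h x] by simp
    show "\<alpha> x = 0" if "\<not> x < length h" using \<open>\<alpha> x \<le> entry h x\<close> that by (simp add: entry_def)
  qed
  show "finite {f. \<forall>x. (x \<in> {..<length h} \<longrightarrow> f x \<in> {..sum_list h}) \<and> (x \<notin> {..<length h} \<longrightarrow> f x = (0::nat))}"
    by (rule finite_set_of_finite_funs) auto
qed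

lemma finite_bounded_msets: "finite A \<Longrightarrow> finite {Q. set_mset Q \<subseteq> A \<and> size Q \<le> k}"
proof (rule finite_subset)
  show "{Q. set_mset Q \<subseteq> A \<and> size Q \<le> k} \<subseteq> mset ` {xs. set xs \<subseteq> A \<and> length xs \<le> k}"
  proof
    fix Q assume Q: "Q \<in> {Q. set_mset Q \<subseteq> A \<and> size Q \<le> k}"
    obtain xs where "mset xs = Q" using ex_mset by blast
    then show "Q \<in> mset ` {xs. set xs \<subseteq> A \<and> length xs \<le> k}" using Q by auto
  qed
qed (rule finite_imageI, rule finite_lists_length_le)

lemma finite_configs_below:
  "finite {p. finite (fst p) \<and> size (snd p) \<le> k \<and> (\<forall>i. content p i \<le> entry h i)}"
proof (rule finite_subset)
  let ?M = "{\<alpha>::nat \<Rightarrow> nat. \<forall>i. \<alpha> i \<le> entry h i}"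
  show "{p. finite (fst p) \<and> size (snd p) \<le> k \<and> (\<forall>i. content p i \<le> entry h i)}
      \<subseteq> Pow ?M \<times> {Q. set_mset Q \<subseteq> ?M \<and> size Q \<le> k}"
  proof
    fix p assume p: "p \<in> {p. finite (fst p) \<and> size (snd p) \<le> k \<and> (\<forall>i. content p i \<le> entry h i)}"
    have "\<alpha> \<in> ?M" if "\<alpha> \<in> fst p \<or> \<alpha> \<in># snd p" for \<alpha>
      using le_content[of p \<alpha>] p that by (auto intro: order_trans)
    then show "p \<in> Pow ?M \<times> {Q. set_mset Q \<subseteq> ?M \<and> size Q \<le> k}"
      using p by (cases p) auto
  qed
  show "finite (Pow ?M \<times> {Q. set_mset Q \<subseteq> ?M \<and> size Q \<le> k})"
    using finite_monomials_below finite_bounded_msets[OF finite_monomials_below] by blast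
qed

lemma pleth_en_eq_card_configs: "pleth_en n (entry g) = int (card (configs n g 0))"
proof -
  let ?A = "{S. finite S \<and> card S = n \<and> (\<forall>\<alpha>\<in>S. fin_supp \<alpha>) \<and> (\<lambda>i. \<Sum>\<alpha>\<in>S. \<alpha> i) = entry g}"
  have fin_supp: "fin_supp \<alpha>" if "finite S" "\<alpha> \<in> S" "\<forall>i. set_content S i = entry g i" for S \<alpha>
  proof -
    have "{i. \<alpha> i \<noteq> 0} \<subseteq> {..<length g}"
      using le_set_content[OF that(1,2)] that(3) by (fastforce simp: entry_def split: if_splits)
    then show ?thesis by (simp add: fin_supp_def finite_subset)
  qed
  have "configs n g 0 = (\<lambda>S. (S, {#})) ` ?A"
    by (auto simp: configs_def content_def mset_content_def set_content_def fun_eq_iff image_iff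
        intro: fin_supp[unfolded set_content_def])
  then have "card (configs n g 0) = card ?A" by (simp add: card_image inj_on_def)
  then show ?thesis by (simp add: pleth_en_def)
qed

text \<open>The involution \<open>flip_config l\<close> trades a monomial x_l k of S for the monomial k
  of Q or back; both configurations have the same keys, so the same k is chosen from either side.\<close>

definition flip_configs :: "nat \<Rightarrow> nat list \<Rightarrow> nat \<Rightarrow> config set" where
  "flip_configs n g J = {p. finite (fst p) \<and> card (fst p) + size (snd p) = n \<and>
      (\<forall>i. i \<noteq> length g \<longrightarrow> content p i = entry g i) \<and> size (snd p) + content p (length g) = J}"

definition raise_at :: "nat \<Rightarrow> (nat \<Rightarrow> nat) \<Rightarrow> nat \<Rightarrow> nat" where
  "raise_at l k = k(l := Suc (k l))"

definition flip_keys :: "nat \<Rightarrow> config \<Rightarrow> (nat \<Rightarrow> nat) set" where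
  "flip_keys l p = (\<lambda>\<alpha>. \<alpha>(l := \<alpha> l - 1)) ` {\<alpha>\<in>fst p. 0 < \<alpha> l} \<union> set_mset (snd p)"

definition flip_config :: "nat \<Rightarrow> config \<Rightarrow> config" where
  "flip_config l p = (let k = (SOME k. k \<in> flip_keys l p) in
     if raise_at l k \<in> fst p then (fst p - {raise_at l k}, add_mset k (snd p))
     else (insert (raise_at l k) (fst p), snd p - {#k#}))"

lemma flip_keys_exchange:
  assumes "raise_at l k \<notin> S"
  shows "flip_keys l (insert (raise_at l k) S, Q) = flip_keys l (S, add_mset k Q)"
proof -
  have "{\<alpha>\<in>insert (raise_at l k) S. 0 < \<alpha> l} = insert (raise_at l k) {\<alpha>\<in>S. 0 < \<alpha> l}"
    by (auto simp: raise_at_def)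
  moreover have "(raise_at l k)(l := raise_at l k l - 1) = k"
    by (auto simp: raise_at_def fun_eq_iff)
  ultimately show ?thesis by (auto simp: flip_keys_def)
qed

lemma content_exchange:
  assumes "finite S" and "raise_at l k \<notin> S"
  shows "content (insert (raise_at l k) S, Q) i = content (S, add_mset k Q) i + (if i = l then 1 else 0)"
  using assms by (simp add: content_def set_content_insert mset_content_add_mset raise_at_def)

lemma flip_configs_exchange:
  assumes "finite S" and "raise_at (length g) k \<notin> S"
  shows "(insert (raise_at (length g) k) S, Q) \<in> flip_configs n g J \<longleftrightarrow> (S, add_mset k Q) \<in> flip_configs n g J"
  using assms content_exchange[OF assms] by (auto simp: flip_configs_def)

lemma flip_config_exchange:
  assumes "raise_at l k \<notin> S" and "(SOME k'. k' \<in> flip_keys l (S, add_mset k Q)) = k"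
  shows "flip_config l (insert (raise_at l k) S, Q) = (S, add_mset k Q)"
    and "flip_config l (S, add_mset k Q) = (insert (raise_at l k) S, Q)"
  using assms flip_keys_exchange[OF assms(1)] by (auto simp: flip_config_def Let_def)

lemma flip_config_flip_configs:
  assumes p: "p \<in> flip_configs n g J" and J: "0 < J"
  shows "flip_config (length g) p \<in> flip_configs n g J"
    and "flip_config (length g) (flip_config (length g) p) = p"
    and "(-1::int) ^ content (flip_config (length g) p) (length g) = - ((-1) ^ content p (length g))"
proof -
  let ?l = "length g"
  obtain S Q where pSQ: "p = (S, Q)" by (cases p)
  have fin: "finite S" using p pSQ by (simp add: flip_configs_def)
  have "flip_keys ?l p \<noteq> {}"
  proof (cases "Q = {#}")
    case True
    then have "set_content S ?l \<noteq> 0" using p pSQ J by (simp add: flip_configs_def content_def mset_content_def)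
    then obtain \<alpha> where "\<alpha> \<in> S" "0 < \<alpha> ?l" by (metis gr0I set_content_def sum.neutral)
    then show ?thesis using pSQ by (auto simp: flip_keys_def)
  qed (auto simp: pSQ flip_keys_def)
  define k where "k = (SOME k. k \<in> flip_keys ?l p)"
  then have key: "k \<in> flip_keys ?l p" using \<open>flip_keys ?l p \<noteq> {}\<close> by (simp add: some_in_eq)
  obtain S0 Q0 where S0: "finite S0" "raise_at ?l k \<notin> S0"
    and cases: "p = (insert (raise_at ?l k) S0, Q0) \<or> p = (S0, add_mset k Q0)"
  proof (cases "raise_at ?l k \<in> S")
    case True
    then show ?thesis using that[of "S - {raise_at ?l k}" Q] fin pSQ by (simp add: insert_absorb)
  next
    case False
    have "raise_at ?l (\<alpha>(?l := \<alpha> ?l - 1)) = \<alpha>" if "0 < \<alpha> ?l" for \<alpha>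
      using that by (auto simp: raise_at_def fun_eq_iff)
    then have "k \<in># Q" using key False pSQ by (auto simp: flip_keys_def)
    then show ?thesis using that[of S "Q - {#k#}"] fin pSQ False by simp
  qed
  have "flip_keys ?l (S0, add_mset k Q0) = flip_keys ?l p"
    using cases flip_keys_exchange[OF S0(2), of Q0] by auto
  then have "(SOME k'. k' \<in> flip_keys ?l (S0, add_mset k Q0)) = k"
    by (simp add: k_def[symmetric])
  note flips = flip_config_exchange[OF S0(2) this]
  note mem = flip_configs_exchange[OF S0, of Q0 n J]
  have "content (insert (raise_at ?l k) S0, Q0) ?l = content (S0, add_mset k Q0) ?l + 1"
    using content_exchange[OF S0] by simp
  with cases p flips mem show "flip_config ?l p \<in> flip_configs n g J"
    and "flip_config ?l (flip_config ?l p) = p"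
    and "(-1::int) ^ content (flip_config ?l p) ?l = - ((-1) ^ content p ?l)"
    by auto
qed

lemma flip_configs_fibre:
  "r \<le> J \<Longrightarrow> {p \<in> flip_configs n g J. content p (length g) = r} = configs n (g @ [r]) (J - r)"
  by (auto simp: flip_configs_def configs_def entry_snoc split: if_splits)

lemma configs_snoc_0: "configs n (g @ [0]) j = configs n g j"
proof -
  have "entry (g @ [0]) = entry g" by (simp add: entry_snoc fun_eq_iff) (simp add: entry_def)
  then show ?thesis by (simp add: configs_def)
qed

lemma card_configs_alternating:
  assumes "0 < J"
  shows "int (card (configs n g J)) =
    (\<Sum>r\<in>{1..J}. (-1) ^ (r - 1) * int (card (configs n (g @ [r]) (J - r))))"
proof -
  have fin: "finite (flip_configs n g J)"
  proof (rule finite_subset[OF _ finite_configs_below[of J "g @ [J]"]])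
    show "flip_configs n g J \<subseteq> {p. finite (fst p) \<and> size (snd p) \<le> J \<and> (\<forall>i. content p i \<le> entry (g @ [J]) i)}"
      by (auto simp: flip_configs_def entry_snoc)
  qed
  have "(\<Sum>p\<in>flip_configs n g J. (-1::int) ^ content p (length g)) = 0"
    using flip_config_flip_configs[OF _ assms]
    by (intro sum_eq_0_if_sign_reversing_involution[OF fin, where \<sigma> = "flip_config (length g)"]) auto
  moreover have "(\<Sum>p\<in>flip_configs n g J. (-1::int) ^ content p (length g)) =
      (\<Sum>r\<in>{0..J}. (-1) ^ r * int (card {p \<in> flip_configs n g J. content p (length g) = r}))"
    by (rule sum_sign_eq_sum_card_fibres[OF fin]) (simp add: flip_configs_def)
  moreover have "\<dots> = (\<Sum>r\<in>{0..J}. (-1) ^ r * int (card (configs n (g @ [r]) (J - r))))"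
    by (rule sum.cong) (simp_all add: flip_configs_fibre)
  ultimately have "(\<Sum>r\<in>{0..J}. (-1) ^ r * int (card (configs n (g @ [r]) (J - r)))) = 0" by simp
  from alternating_sum_shift[OF this] show ?thesis
    by (simp add: configs_snoc_0)
qed

lemma skew_e_coeff_configs:
  "skew_e_coeff (\<lambda>g. int (card (configs n g 0))) g j = int (card (configs n g j))"
proof (induction j arbitrary: g rule: less_induct)
  case (less j)
  then show ?case
    by (cases "j = 0") (simp_all add: skew_e_coeff_Suc card_configs_alternating)
qed

section \<open>Hook coefficients\<close>

lemma single_row_iff:
  assumes "0 < A"
  shows "(\<forall>i. entry mu (Suc i) = 0) \<and> sum_list mu = A \<longleftrightarrow> mu = A # replicate (length mu - 1) 0"
proof
  assume rows: "(\<forall>i. entry mu (Suc i) = 0) \<and> sum_list mu = A"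
  have "entry mu i = 0" if "1 \<le> i" for i using rows that by (cases i) auto
  then have "entry mu 0 = A"
    using sum_entry_eq_sum_list[of 1 mu] rows by simp
  then have "0 < length mu" using assms by (simp add: entry_def split: if_splits)
  show "mu = A # replicate (length mu - 1) 0"
  proof (rule entry_eqI)
    show "length mu = length (A # replicate (length mu - 1) 0)" using \<open>0 < length mu\<close> by simp
    show "entry mu i = entry (A # replicate (length mu - 1) 0) i" for i
      using rows \<open>entry mu 0 = A\<close> by (cases i) (auto simp: entry_def)
  qed
next
  assume "mu = A # replicate (length mu - 1) 0"
  then obtain R where mu: "mu = A # replicate R 0" by blast
  show "(\<forall>i. entry mu (Suc i) = 0) \<and> sum_list mu = A" unfolding mu by (simp add: entry_def)
qed

lemma kostka_strips_single_row:
  assumes "0 < A"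
  shows "kostka_strips mu [A] = (if mu = A # replicate (length mu - 1) 0 then 1 else 0)"
proof -
  let ?z = "replicate (length mu) (0::nat)"
  have zero: "nu = ?z" if "nu \<in> horiz_strips mu A" "sum_list nu = 0" for nu
  proof -
    have "length nu = length mu" "\<forall>x\<in>set nu. x = 0"
      using that by (auto simp: horiz_strips_def horiz_strip_def)
    then show ?thesis using replicate_length_same[of nu 0] by simp
  qed
  have "{nu \<in> horiz_strips mu A. sum_list nu = 0} = (if ?z \<in> horiz_strips mu A then {?z} else {})"
  proof (cases "?z \<in> horiz_strips mu A")
    case True
    have "{nu \<in> horiz_strips mu A. sum_list nu = 0} = {?z}"
    proof (intro equalityI subsetI)
      fix nu assume "nu \<in> {nu \<in> horiz_strips mu A. sum_list nu = 0}"
      then have "nu = ?z" using zero by blast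
      then show "nu \<in> {?z}" by simp
    qed (use True in \<open>simp add: sum_list_replicate\<close>)
    then show ?thesis using True by simp
  next
    case False
    then have "{nu \<in> horiz_strips mu A. sum_list nu = 0} = {}" using zero by blast
    then show ?thesis using False by simp
  qed
  moreover have "?z \<in> horiz_strips mu A \<longleftrightarrow> horiz_strip ?z mu \<and> sum_list mu = A"
    by (simp add: horiz_strips_def sum_list_replicate)
  moreover have "horiz_strip ?z mu \<longleftrightarrow> (\<forall>i. entry mu (Suc i) = 0)"
    by (auto simp: horiz_strip_def entry_def)
  moreover have "kostka_strips mu [A] = card {nu \<in> horiz_strips mu A. sum_list nu = 0}"
    by (simp only: kostka_strips.simps sum.inter_filter[OF finite_horiz_strips, symmetric] card_eq_sum)
  ultimately show ?thesis using single_row_iff[OF assms] by simp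
qed

definition hook :: "nat \<Rightarrow> nat \<Rightarrow> nat list" where
  "hook A B = A # replicate B 1"

lemma hook_partitions: "0 < A \<Longrightarrow> hook A B \<in> partitions (A + B)"
  by (induction B) (auto simp: hook_def partitions_def is_partition_def)

lemma single_row_vert_strips_iff:
  assumes A: "0 < A" and l: "l \<in> partitions (A + B)"
  shows "A # replicate (length l - 1) 0 \<in> vert_strips l B \<longleftrightarrow>
    l = hook A B \<or> (0 < B \<and> l = hook (A + 1) (B - 1))"
proof
  let ?R = "length l" and ?r = "A # replicate (length l - 1) 0"
  have part: "is_partition l" "sum_list l = A + B" using l by (auto simp: partitions_def)
  assume "?r \<in> vert_strips l B"
  then have v: "vert_strip ?r l" by (simp add: vert_strips_def)
  then have R: "0 < ?R" by (auto simp: vert_strip_def)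
  have first: "A \<le> entry l 0" "entry l 0 \<le> Suc A" using v R by (auto simp: vert_strip_def entry_def)
  have "entry l i = 1" if "0 < i" "i < ?R" for i
    using v that partition_entry_pos[OF part(1) that(2)]
    by (auto simp: vert_strip_def entry_def nth_Cons' split: if_splits)
  then have l: "l = entry l 0 # replicate (?R - 1) 1"
    using R by (intro entry_eqI) (auto simp: entry_def nth_Cons' split: if_splits)
  moreover have "sum_list l = entry l 0 + (?R - 1)" by (subst l) (simp add: sum_list_replicate)
  ultimately have "entry l 0 + (?R - 1) = A + B" using part(2) by simp
  then show "l = hook A B \<or> (0 < B \<and> l = hook (A + 1) (B - 1))"
  proof (cases "entry l 0 = A")
    case True
    then have "?R - 1 = B" using \<open>entry l 0 + (?R - 1) = A + B\<close> by simp
    then show ?thesis using l True by (simp add: hook_def)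
  next
    case False
    then have "entry l 0 = Suc A" using first by simp
    then have "?R - 1 = B - 1" "0 < B" using \<open>entry l 0 + (?R - 1) = A + B\<close> R by auto
    then show ?thesis using l \<open>entry l 0 = Suc A\<close> by (simp add: hook_def)
  qed
qed (auto simp: vert_strips_def vert_strip_def hook_def entry_def nth_Cons' sum_list_replicate)

lemma skew_e_coeff_kostka_single_row:
  assumes "0 < A" and "sorted_wrt (\<ge>) l"
  shows "skew_e_coeff (\<lambda>g. int (kostka l (entry g))) [A] B
    = (if A # replicate (length l - 1) 0 \<in> vert_strips l B then 1 else 0)"
proof -
  have "(\<lambda>g. int (kostka l (entry g))) = (\<lambda>g. int (kostka_strips l (rev g)))"
    using kostka_eq_kostka_strips[OF assms(2)] by simp
  then have "skew_e_coeff (\<lambda>g. int (kostka l (entry g))) [A] B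
      = (\<Sum>mu\<in>vert_strips l B. if mu = A # replicate (length l - 1) 0 then 1 else 0)"
    using skew_e_coeff_kostka[OF assms(2)] kostka_strips_single_row[OF assms(1)]
    by (auto simp: vert_strips_def vert_strip_def intro: sum.cong)
  then show ?thesis using finite_vert_strips by (simp add: sum.delta')
qed

text \<open>Both sides of f = \<Sum>_\<lambda> c \<lambda> s_\<lambda> under F \<mapsto> [x_0^A] e_B^\<perp> F.\<close>

lemma card_configs_single_row:
  assumes A: "0 < A" and c: "schur_expansion (pleth_en n) c"
  shows "int (card (configs n [A] B)) = c (hook A B) + (if 0 < B then c (hook (A + 1) (B - 1)) else 0)"
proof -
  let ?K = "\<lambda>l g. int (kostka l (entry g))"
  have F: "pleth_en n (entry g) = (\<Sum>l\<in>partitions (sum_list g). c l * ?K l g)" for g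
    using c fin_supp_entry[of g] by (simp add: schur_expansion_def deg_entry partitions_def)
  have "int (card (configs n [A] B)) = skew_e_coeff (\<lambda>g. pleth_en n (entry g)) [A] B"
    using skew_e_coeff_configs[of n "[A]" B] by (simp add: pleth_en_eq_card_configs)
  also have "\<dots> = (\<Sum>l\<in>partitions (A + B). c l * skew_e_coeff (?K l) [A] B)"
    using skew_e_coeff_linear[where G = ?K, OF F] by simp
  also have "\<dots> = (\<Sum>l\<in>partitions (A + B). if l = hook A B \<or> (0 < B \<and> l = hook (A + 1) (B - 1)) then c l else 0)"
    using single_row_vert_strips_iff[OF A]
    by (intro sum.cong) (auto simp: skew_e_coeff_kostka_single_row[OF A] partitions_def partition_sorted)
  also have "\<dots> = (\<Sum>l\<in>{l\<in>partitions (A + B). l = hook A B \<or> (0 < B \<and> l = hook (A + 1) (B - 1))}. c l)"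
    by (rule sum.inter_filter[OF finite_partitions, symmetric])
  also have "\<dots> = c (hook A B) + (if 0 < B then c (hook (A + 1) (B - 1)) else 0)"
  proof (cases "0 < B")
    case True
    then have "{l\<in>partitions (A + B). l = hook A B \<or> (0 < B \<and> l = hook (A + 1) (B - 1))}
        = {hook A B, hook (A + 1) (B - 1)}"
      using hook_partitions[OF A, of B] hook_partitions[of "A + 1" "B - 1"] by auto
    moreover have "hook A B \<noteq> hook (A + 1) (B - 1)" by (simp add: hook_def)
    ultimately show ?thesis using True by simp
  next
    case False
    then have "{l\<in>partitions (A + B). l = hook A B \<or> (0 < B \<and> l = hook (A + 1) (B - 1))} = {hook A B}"
      using hook_partitions[OF A, of B] by auto
    then show ?thesis using False by simp
  qed
  finally show ?thesis .
qed

text \<open>A configuration with product x_0^A is a set of n - B distinct powers of x_0 and a multiset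
  of B such powers, i.e. a strict and a weak partition with zero parts allowed.\<close>

definition weak_strict_pairs :: "nat \<Rightarrow> nat \<Rightarrow> nat \<Rightarrow> (nat list \<times> nat list) set" where
  "weak_strict_pairs n A B = {(lam, mu). length lam = B \<and> sorted_wrt (\<ge>) lam
      \<and> length mu = n - B \<and> sorted_wrt (>) mu \<and> sum_list lam + sum_list mu = A}"

definition x0_pow :: "nat \<Rightarrow> nat \<Rightarrow> nat" where
  "x0_pow k = (\<lambda>i. if i = 0 then k else 0)"

definition pair_config :: "nat list \<times> nat list \<Rightarrow> config" where
  "pair_config p = (x0_pow ` set (snd p), mset (map x0_pow (fst p)))"

lemma inj_x0_pow: "inj x0_pow"
  by (rule injI) (metis x0_pow_def)

lemma x0_pow_eq: "(\<forall>i. 0 < i \<longrightarrow> \<alpha> i = 0) \<Longrightarrow> x0_pow (\<alpha> 0) = \<alpha>"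
  by (auto simp: x0_pow_def fun_eq_iff)

lemma set_content_x0_pow:
  assumes "distinct mu"
  shows "set_content (x0_pow ` set mu) i = (if i = 0 then sum_list mu else 0)"
proof -
  have "set_content (x0_pow ` set mu) i = (\<Sum>k\<in>set mu. x0_pow k i)"
    unfolding set_content_def by (simp add: sum.reindex[OF inj_on_subset[OF inj_x0_pow subset_UNIV]])
  then show ?thesis
    using assms by (simp add: x0_pow_def distinct_sum_list_conv_Sum)
qed

lemma mset_content_x0_pow: "mset_content (image_mset x0_pow (mset lam)) i = (if i = 0 then sum_list lam else 0)"
  by (induction lam) (auto simp: mset_content_def x0_pow_def)

lemma image_mset_x0_pow_inverse: "image_mset (\<lambda>\<alpha>. \<alpha> 0) (image_mset x0_pow M) = M"
  by (induction M) (simp_all add: x0_pow_def)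

lemma sorted_desc_eq_if_mset_eq:
  fixes xs ys :: "nat list"
  assumes "sorted_wrt (\<ge>) xs" and "sorted_wrt (\<ge>) ys" and "mset xs = mset ys"
  shows "xs = ys"
proof -
  have "sorted (rev xs)" "sorted (rev ys)" using assms by (simp_all add: sorted_wrt_rev)
  then have "sort (rev ys) = rev xs" "sort (rev ys) = rev ys"
    using assms(3) by (auto intro: properties_for_sort sorted_sort_id)
  then show ?thesis by simp
qed

lemma strict_desc_imp_sorted_desc: "sorted_wrt (>) xs \<Longrightarrow> sorted_wrt (\<ge>) (xs :: nat list)"
  by (auto elim: sorted_wrt_mono_rel[rotated])

lemma strict_desc_distinct: "sorted_wrt (>) xs \<Longrightarrow> distinct (xs :: nat list)"
  by (metis distinct_rev sorted_wrt_rev strict_sorted_iff)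

lemma pair_config_inj: "inj_on pair_config (weak_strict_pairs n A B)"
proof (rule inj_onI)
  fix p q assume p: "p \<in> weak_strict_pairs n A B" and q: "q \<in> weak_strict_pairs n A B"
    and eq: "pair_config p = pair_config q"
  have "set (snd p) = set (snd q)"
    using eq inj_x0_pow by (simp add: pair_config_def inj_image_eq_iff)
  then have "mset (snd p) = mset (snd q)"
    using p q by (auto simp: weak_strict_pairs_def strict_desc_distinct set_eq_iff_mset_eq_distinct)
  moreover have "mset (fst p) = mset (fst q)"
    using arg_cong[OF eq, of "\<lambda>p. image_mset (\<lambda>\<alpha>. \<alpha> 0) (snd p)"]
    by (simp add: pair_config_def image_mset_x0_pow_inverse)
  ultimately show "p = q"
    using p q sorted_desc_eq_if_mset_eq strict_desc_imp_sorted_desc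
    by (auto simp: weak_strict_pairs_def prod_eq_iff)
qed

lemma pair_config_configs:
  assumes "B \<le> n" and "p \<in> weak_strict_pairs n A B"
  shows "pair_config p \<in> configs n [A] B"
proof -
  obtain lam mu where p: "p = (lam, mu)" by (cases p)
  have l: "length lam = B" "length mu = n - B" "sorted_wrt (>) mu" "sum_list lam + sum_list mu = A"
    using assms(2) p by (auto simp: weak_strict_pairs_def)
  have "card (x0_pow ` set mu) = n - B"
    using l strict_desc_distinct[OF l(3)] card_image[OF inj_on_subset[OF inj_x0_pow]]
    by (simp add: distinct_card)
  then show ?thesis
    using assms(1) l strict_desc_distinct[OF l(3)]
    by (auto simp: configs_def pair_config_def p content_def set_content_x0_pow mset_content_x0_pow entry_def)
qed

lemma configs_single_row_x0_pow:
  assumes "p \<in> configs n [A] B" and "\<alpha> \<in> fst p \<or> \<alpha> \<in># snd p"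
  shows "x0_pow (\<alpha> 0) = \<alpha>"
proof (rule x0_pow_eq, intro allI impI)
  fix i :: nat assume "0 < i"
  then have "content p i = 0" using assms(1) by (simp add: configs_def entry_def)
  then show "\<alpha> i = 0" using le_content[of p \<alpha> i] assms by (simp add: configs_def)
qed

lemma configs_single_row_in_image:
  assumes "p \<in> configs n [A] B"
  shows "p \<in> pair_config ` weak_strict_pairs n A B"
proof -
  obtain S Q where p: "p = (S, Q)" by (cases p)
  have fin: "finite S" and size: "card S + size Q = n" "size Q = B" and c: "\<forall>i. content p i = entry [A] i"
    using assms p by (auto simp: configs_def)
  have S: "\<forall>\<alpha>\<in>S. x0_pow (\<alpha> 0) = \<alpha>" and Q: "\<forall>\<alpha>\<in>#Q. x0_pow (\<alpha> 0) = \<alpha>"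
    using configs_single_row_x0_pow[OF assms] p by auto
  define mu where "mu = rev (sorted_list_of_set ((\<lambda>\<alpha>. \<alpha> 0) ` S))"
  define lam where "lam = rev (sorted_list_of_multiset (image_mset (\<lambda>\<alpha>. \<alpha> 0) Q))"
  have inj: "inj_on (\<lambda>\<alpha>. \<alpha> 0) S" using S by (metis inj_onI)
  have "x0_pow ` set mu = (\<lambda>\<alpha>. x0_pow (\<alpha> 0)) ` S" using fin by (simp add: mu_def image_image)
  then have set_mu: "x0_pow ` set mu = S" using S by simp
  have "image_mset x0_pow (mset lam) = image_mset (\<lambda>\<alpha>. x0_pow (\<alpha> 0)) Q"
    by (simp add: lam_def image_mset.compositionality comp_def)
  then have mset_lam: "image_mset x0_pow (mset lam) = Q" using Q by (simp add: image_mset_cong[of Q _ id])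
  have mu: "sorted_wrt (>) mu" "distinct mu" "length mu = card S"
    using fin card_image[OF inj] by (simp_all add: mu_def sorted_wrt_rev strict_sorted_list_of_set)
  have lam: "sorted_wrt (\<ge>) lam" "length lam = B"
    using size by (simp_all add: lam_def sorted_wrt_rev flip: size_mset)
  have "sum_list lam + sum_list mu = A"
    using c[rule_format, of 0] set_content_x0_pow[OF mu(2), of 0] mset_content_x0_pow[of lam 0]
    by (simp add: p content_def set_mu mset_lam entry_def)
  then have "(lam, mu) \<in> weak_strict_pairs n A B"
    using mu lam size by (simp add: weak_strict_pairs_def)
  moreover have "p = pair_config (lam, mu)" by (simp add: pair_config_def p set_mu mset_lam)
  ultimately show ?thesis by (simp add: image_eqI)
qed

lemma card_configs_single_row_eq:
  assumes "B \<le> n"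
  shows "card (configs n [A] B) = card (weak_strict_pairs n A B)"
proof -
  have "configs n [A] B = pair_config ` weak_strict_pairs n A B"
    using pair_config_configs[OF assms] configs_single_row_in_image by blast
  then show ?thesis by (simp add: card_image pair_config_inj)
qed

lemma finite_weak_strict_pairs: "finite (weak_strict_pairs n A B)"
proof (rule finite_subset)
  show "weak_strict_pairs n A B \<subseteq>
      {xs. set xs \<subseteq> {0..A} \<and> length xs \<le> B} \<times> {xs. set xs \<subseteq> {0..A} \<and> length xs \<le> n}"
    by (auto simp: weak_strict_pairs_def dest: member_le_sum_list)
  show "finite ({xs. set xs \<subseteq> {0..A} \<and> length xs \<le> B} \<times> {xs. set xs \<subseteq> {0..A} \<and> length xs \<le> n})"
    using finite_lists_length_le[of "{0..A}"] by blast
qed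

text \<open>Pairs with \<mu>_1 \<le> \<lambda>_1 correspond to hook pairs for (a + 1, b - 1): the part \<lambda>_1,
  increased by one, moves to the front of \<mu>.\<close>

definition move_head :: "nat list \<times> nat list \<Rightarrow> nat list \<times> nat list" where
  "move_head p = (tl (fst p), Suc (hd (fst p)) # snd p)"

definition move_back :: "nat list \<times> nat list \<Rightarrow> nat list \<times> nat list" where
  "move_back q = ((hd (snd q) - 1) # fst q, tl (snd q))"

lemma move_head_hook_pairs:
  assumes b: "0 < b" "b + 1 \<le> n"
    and p: "p \<in> weak_strict_pairs n (a + 1) b" "\<not> hd (fst p) < hd (snd p)"
  shows "move_head p \<in> hook_pairs (a + 1) (b - 1) n" and "move_back (move_head p) = p"
proof -
  obtain x xs y ys where p_eq: "p = (x # xs, y # ys)"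
    using p b by (cases p; cases "fst p"; cases "snd p") (auto simp: weak_strict_pairs_def)
  have "b - 1 = 0 \<or> hd xs < Suc x"
    using p(1) by (cases xs) (auto simp: weak_strict_pairs_def p_eq)
  then show "move_head p \<in> hook_pairs (a + 1) (b - 1) n"
    using p b by (auto simp: weak_strict_pairs_def hook_pairs_def move_head_def p_eq)
  show "move_back (move_head p) = p" by (simp add: move_head_def move_back_def p_eq)
qed

lemma move_back_weak_strict_pairs:
  assumes b: "0 < b" "b + 1 \<le> n" and q: "q \<in> hook_pairs (a + 1) (b - 1) n"
  shows "move_back q \<in> weak_strict_pairs n (a + 1) b" and "\<not> hd (fst (move_back q)) < hd (snd (move_back q))"
    and "move_head (move_back q) = q"
proof -
  obtain lam y0 y1 ys where q_eq: "q = (lam, y0 # y1 # ys)"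
    using q b by (cases q; cases "snd q"; cases "tl (snd q)")
      (auto simp: hook_pairs_def Suc_le_length_iff)
  have "\<forall>z\<in>set lam. z < y0"
    using q b by (cases lam) (auto simp: hook_pairs_def q_eq)
  then show "move_back q \<in> weak_strict_pairs n (a + 1) b"
    using q b by (auto simp: weak_strict_pairs_def hook_pairs_def move_back_def q_eq)
  show "\<not> hd (fst (move_back q)) < hd (snd (move_back q))"
    using q by (auto simp: hook_pairs_def move_back_def q_eq)
  show "move_head (move_back q) = q"
    using q by (auto simp: hook_pairs_def move_back_def move_head_def q_eq)
qed

lemma card_weak_strict_pairs_split:
  assumes "0 < b" "b + 1 \<le> n"
  shows "card (weak_strict_pairs n (a + 1) b) = card (hook_pairs a b n) + card (hook_pairs (a + 1) (b - 1) n)"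
proof -
  let ?C = "{p \<in> weak_strict_pairs n (a + 1) b. \<not> hd (fst p) < hd (snd p)}"
  have split: "weak_strict_pairs n (a + 1) b = hook_pairs a b n \<union> ?C"
    and disj: "hook_pairs a b n \<inter> ?C = {}"
    using assms by (auto simp: hook_pairs_def weak_strict_pairs_def)
  have "bij_betw move_head ?C (hook_pairs (a + 1) (b - 1) n)"
  proof (rule bij_betw_byWitness[where f' = move_back])
    show "\<forall>p\<in>?C. move_back (move_head p) = p"
      using move_head_hook_pairs(2)[OF assms] by blast
    show "\<forall>q\<in>hook_pairs (a + 1) (b - 1) n. move_head (move_back q) = q"
      using move_back_weak_strict_pairs(3)[OF assms] by blast
    show "move_head ` ?C \<subseteq> hook_pairs (a + 1) (b - 1) n"
      using move_head_hook_pairs(1)[OF assms] by blast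
    show "move_back ` hook_pairs (a + 1) (b - 1) n \<subseteq> ?C"
      using move_back_weak_strict_pairs(1,2)[OF assms] by blast
  qed
  then have C: "card ?C = card (hook_pairs (a + 1) (b - 1) n)" by (rule bij_betw_same_card)
  have "finite (hook_pairs a b n \<union> ?C)"
    using finite_weak_strict_pairs[of n "a + 1" b] split by simp
  then have "card (hook_pairs a b n \<union> ?C) = card (hook_pairs a b n) + card ?C"
    using disj by (simp add: card_Un_disjoint)
  then show ?thesis using split C by (simp only:)
qed

lemma hook_coefficient:
  assumes c: "schur_expansion (pleth_en n) c"
  shows "b + 1 \<le> n \<Longrightarrow> c (hook (a + 1) b) = int (card (hook_pairs a b n))"
proof (induction b arbitrary: a)
  case 0
  have "hook_pairs a 0 n = weak_strict_pairs n (a + 1) 0"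
    by (auto simp: hook_pairs_def weak_strict_pairs_def)
  then show ?case
    using card_configs_single_row[OF _ c, of "a + 1" 0] card_configs_single_row_eq[of 0 n "a + 1"] by simp
next
  case (Suc b)
  have "c (hook (a + 1) (Suc b)) + c (hook (a + 1 + 1) b) = int (card (weak_strict_pairs n (a + 1) (Suc b)))"
    using card_configs_single_row[OF _ c, of "a + 1" "Suc b"] card_configs_single_row_eq[of "Suc b" n "a + 1"]
      Suc.prems by simp
  then show ?case
    using Suc.IH[of "a + 1"] Suc.prems card_weak_strict_pairs_split[of "Suc b" n a] by simp
qed

text \<open>\<open>schur_coeff\<close> is defined by \<open>THE\<close>; the value is determined because every Schur expansion has
  the same hook coefficients, so uniqueness of the whole expansion is not needed.\<close>

theorem corollary3p13:
  fixes a b n :: nat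
  assumes "b + 1 \<le> n"
  shows "schur_coeff (pleth_en n) ((a + 1) # replicate b 1) = int (card (hook_pairs a b n))"
proof -
  obtain c0 where "schur_expansion (pleth_en n) c0"
    using schur_expansion_exists[of "pleth_en n"] pleth_en_mset_invariant by blast
  moreover have "c ((a + 1) # replicate b 1) = int (card (hook_pairs a b n))"
    if "schur_expansion (pleth_en n) c" for c
    using hook_coefficient[OF that assms] by (simp add: hook_def)
  ultimately show ?thesis
    unfolding schur_coeff_def by (intro the_equality) blast+
qed

end
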